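(* Let $\mathbf{D}^\pm_{EC}$ be EC fluctuations (satisfying (C1)–(C5)) that are smooth, and suppose the LGL differentiation matrix $\mathcal{D}$ is $p$th order accurate (for every sufficiently smooth scalar $g$, $\sum_m\mathcal{D}_{im}g(\xi_m)=g'(\xi_i)+\mathcal{O}(\Delta\xi^p)$). Then the nonconservative DGSEM in flux differencing form $$\omega_i\frac{\Delta x_k}{2}\dot{\mathbf{U}}^k_i+\omega_i\sum_{m=0}^N 2\mathcal{D}_{im}\mathbf{D}^-_{EC}(\mathbf{U}^k_i,\mathbf{U}^k_m)+\delta_{i0}\mathbf{D}^+_{EC}(\mathbf{U}^{k-1}_N,\mathbf{U}^k_0)+\delta_{iN}\mathbf{D}^-_{EC}(\mathbf{U}^k_N,\mathbf{U}^{k+1}_0)=0$$ (i) approximates the nonconservative product in the volume with order $p$, i.e. for smooth $\mathbf{u}(\xi)$, $\sum_m 2\mathcal{D}_{im}\mathbf{D}^-_{EC}(\mathbf{u}(\xi_i),\mathbf{u}(\xi_m))=\mathbf{A}(\mathbf{u}(\xi_i))\mathbf{u}'(\xi_i)+\mathcal{O}(\Delta\xi^p)$, and (ii) is entropy conservative: on each element (with time-differentiable solution), $\sum_{i}\omega_i\frac{\Delta x_k}{2}\frac{dS(\mathbf{U}^k_i)}{dt}=\mathcal{F}(\mathbf{U}^{k-1}_N,\mathbf{U}^k_0)-\mathcal{F}(\mathbf{U}^k_N,\mathbf{U}^{k+1}_0)$ with the consistent numerical entropy flux $\mathcal{F}(\mathbf{u}_L,\mathbf{u}_R)=q(\ma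thbf{u}_L)+\mathbf{w}(\mathbf{u}_L)^T\mathbf{D}^-_{EC}(\mathbf{u}_L,\mathbf{u}_R)$.
   Context: System: $\mathbf{u}_t+\mathbf{f}(\mathbf{u})_x+\mathbf{B}(\mathbf{u})\mathbf{u}_x=0$, $\mathbf{u}\in\mathcal{U}\subset\mathbb{R}^n$, generalized Jacobian $\mathbf{A}:=\mathbf{f}_{\mathbf{u}}+\mathbf{B}$. Entropy pair: a strictly convex $C^2$ function $S:\mathcal{U}\to\mathbb{R}$ and entropy flux $q$ with $q_{\mathbf{u}}=\mathbf{w}^T(\mathbf{f}_{\mathbf{u}}+\mathbf{B})$, where $\mathbf{w}(\mathbf{u}):=S_{\mathbf{u}}(\mathbf{u})$; write $\mathbf{w}_L=\mathbf{w}(\mathbf{u}_L)$, $q_L=q(\mathbf{u}_L)$, etc. A family of paths is a Lipschitz map $\Phi(s;\mathbf{u}_L,\mathbf{u}_R)\in\mathcal{U}$, $s\in[0,1]$, with $\Phi(0;\cdot)=\mathbf{u}_L$, $\Phi(1;\cdot)=\mathbf{u}_R$, $\Phi(s;\mathbf{u},\mathbf{u})=\mathbf{u}$. Fluctuations $\mathbf{D}^\pm:\mathcal{U}\times\mathcal{U}\to\mathbb{R}^n$ are EC if for all $\mathbf{u},\mathbf{u}_L,\mathbf{u}_R$: (C1) $\mathbf{D}^\pm(\mathbf{u},\mathbf{u})=0$; (C2) $\mathbf{D}^-(\mathbf{u}_L,\mathbf{u}_R)+\mathbf{D}^+(\mathbf{u}_L,\mathbf{u}_R)=\int_0^1\mathbf{A}(\Phi(s;\mathbf{u}_L,\mathbf{u}_R))\partial_s\Phi(s;\mathbf{u}_L,\mathbf{u}_R)\,ds$;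 (C3) $\mathbf{D}^-(\mathbf{u}_L,\mathbf{u}_R)+\mathbf{D}^+(\mathbf{u}_R,\mathbf{u}_L)=0$; (C4) $\mathbf{w}_L^T\mathbf{D}^-(\mathbf{u}_L,\mathbf{u}_R)+\mathbf{w}_R^T\mathbf{D}^+(\mathbf{u}_L,\mathbf{u}_R)=q_R-q_L$; (C5) $\frac{\partial\mathbf{D}^-(\mathbf{u}_L,\mathbf{u}_R)}{\partial\mathbf{u}_R}\big|_{\mathbf{u}_R=\mathbf{u}_L}=\frac12\mathbf{A}(\mathbf{u}_L)$. Discretization: elements $\Omega^k=[x_{k-1},x_k]$ of width $\Delta x_k$, affinely mapped to $[-1,1]$; nodal values $\mathbf{U}^k_i$ at LGL nodes $-1=\xi_0<\dots<\xi_N=1$ with LGL weights $\omega_i$; $\mathcal{D}_{ij}=l_j'(\xi_i)$ for the Lagrange basis $l_j$; these satisfy the summation-by-parts property $\mathcal{Q}+\mathcal{Q}^T=\mathcal{B}$ with $\mathcal{Q}_{ij}=\omega_i\mathcal{D}_{ij}$, $\mathcal{B}_{ij}=\delta_{iN}\delta_{jN}-\delta_{i0}\delta_{j0}$. *)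

theory Defs
  imports "HOL-Analysis.Analysis" "HOL-Computational_Algebra.Polynomial"
    "HOL-Library.Landau_Symbols"
begin

text \<open>Legendre polynomials via Bonnet's recursion
  (n+2) P_{n+2} = (2n+3) x P_{n+1} - (n+1) P_n.\<close>
fun legendre :: "nat \<Rightarrow> real poly" where
  "legendre 0 = 1"
| "legendre (Suc 0) = [:0, 1:]"
| "legendre (Suc (Suc n)) =
     smult (1 / (real n + 2))
       (smult (2 * real n + 3) ([:0, 1:] * legendre (Suc n)) - smult (real n + 1) (legendre n))"

text \<open>The LGL nodes of degree N are the roots of (1 - x^2) P_N'(x), listed increasingly:
  lgl_node N 0 = -1 < ... < lgl_node N N = 1 (for N >= 1).\<close>
definition lgl_node :: "nat \<Rightarrow> nat \<Rightarrow> real" where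
  "lgl_node N i =
     sorted_list_of_set {x. poly ([:1, 0, -1:] * pderiv (legendre N)) x = 0} ! i"

definition lgl_weight :: "nat \<Rightarrow> nat \<Rightarrow> real" where
  "lgl_weight N i = 2 / (real N * (real N + 1) * (poly (legendre N) (lgl_node N i))\<^sup>2)"

definition lagrange_basis :: "nat \<Rightarrow> nat \<Rightarrow> real poly" where
  "lagrange_basis N j =
     (\<Prod>k\<in>{0..N} - {j}. smult (1 / (lgl_node N j - lgl_node N k)) [:- lgl_node N k, 1:])"

definition lgl_D :: "nat \<Rightarrow> nat \<Rightarrow> nat \<Rightarrow> real" where
  "lgl_D N i j = poly (pderiv (lagrange_basis N j)) (lgl_node N i)"

definition strict_convex_on :: "'a::real_vector set \<Rightarrow> ('a \<Rightarrow> real) \<Rightarrow> bool" where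
  "strict_convex_on A f \<longleftrightarrow> convex A \<and>
     (\<forall>x\<in>A. \<forall>y\<in>A. x \<noteq> y \<longrightarrow> (\<forall>t. 0 < t \<and> t < 1 \<longrightarrow>
        f ((1 - t) *\<^sub>R x + t *\<^sub>R y) < (1 - t) * f x + t * f y))"

text \<open>C^infinity on an open set: there is a family F of iterated Frechet derivatives,
  F vs x = d^k f(x)[v_1,...,v_k] for vs = [v_k,...,v_1], with F [] = f, each F vs having
  Frechet derivative v \<mapsto> F (v # vs) x at every point of A, and each F vs continuous on A.\<close>
definition smooth_on :: "'a::real_normed_vector set \<Rightarrow> ('a \<Rightarrow> 'b::real_normed_vector) \<Rightarrow> bool" where
  "smooth_on A f \<longleftrightarrow> (\<exists>F :: 'a list \<Rightarrow> 'a \<Rightarrow> 'b.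
     (\<forall>x\<in>A. F [] x = f x) \<and>
     (\<forall>vs. \<forall>x\<in>A. (F vs has_derivative (\<lambda>v. F (v # vs) x)) (at x)) \<and>
     (\<forall>vs. continuous_on A (F vs)))"

definition C2_with_gradient :: "('a::euclidean_space) set \<Rightarrow> ('a \<Rightarrow> real) \<Rightarrow> ('a \<Rightarrow> 'a) \<Rightarrow> bool" where
  "C2_with_gradient A S w \<longleftrightarrow>
     (\<forall>u\<in>A. (S has_derivative (\<lambda>v. w u \<bullet> v)) (at u)) \<and>
     (\<exists>H :: 'a \<Rightarrow> 'a \<Rightarrow>\<^sub>L 'a. (\<forall>u\<in>A. (w has_derivative blinfun_apply (H u)) (at u))
        \<and> continuous_on A H)"

text \<open>Generalized Jacobian A(u) = f_u(u) + B(u), where fder u is the Frechet derivative of f.\<close>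
definition gen_jacobian ::
  "(real^'a::finite \<Rightarrow> ((real^'a) \<Rightarrow>\<^sub>L (real^'a))) \<Rightarrow> (real^'a \<Rightarrow> real^'a^'a) \<Rightarrow> real^'a \<Rightarrow> real^'a^'a" where
  "gen_jacobian fder B u = matrix (blinfun_apply (fder u)) + B u"

definition path_family :: "(real^'n::finite) set \<Rightarrow> (real \<Rightarrow> real^'n \<Rightarrow> real^'n \<Rightarrow> real^'n) \<Rightarrow> bool" where
  "path_family U \<Phi> \<longleftrightarrow>
     (\<exists>L. L-lipschitz_on ({0..1} \<times> U \<times> U) (\<lambda>(s, a, b). \<Phi> s a b)) \<and>
     (\<forall>s\<in>{0..1}. \<forall>a\<in>U. \<forall>b\<in>U. \<Phi> s a b \<in> U) \<and>
     (\<forall>a\<in>U. \<forall>b\<in>U. \<Phi> 0 a b = a \<and> \<Phi> 1 a b = b) \<and>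
     (\<forall>s\<in>{0..1}. \<forall>u\<in>U. \<Phi> s u u = u)"

definition EC_fluctuations ::
  "(real^'n::finite) set \<Rightarrow> (real^'n \<Rightarrow> real^'n^'n) \<Rightarrow> (real \<Rightarrow> real^'n \<Rightarrow> real^'n \<Rightarrow> real^'n)
   \<Rightarrow> (real^'n \<Rightarrow> real^'n) \<Rightarrow> (real^'n \<Rightarrow> real)
   \<Rightarrow> (real^'n \<Rightarrow> real^'n \<Rightarrow> real^'n) \<Rightarrow> (real^'n \<Rightarrow> real^'n \<Rightarrow> real^'n) \<Rightarrow> bool" where
  "EC_fluctuations U A \<Phi> w q Dm Dp \<longleftrightarrow>
     (\<forall>u\<in>U. Dm u u = 0 \<and> Dp u u = 0) \<and>
     (\<forall>a\<in>U. \<forall>b\<in>U.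
        ((\<lambda>s. A (\<Phi> s a b) *v vector_derivative (\<lambda>s. \<Phi> s a b) (at s)) has_integral (Dm a b + Dp a b)) {0..1}) \<and>
     (\<forall>a\<in>U. \<forall>b\<in>U. Dm a b + Dp b a = 0) \<and>
     (\<forall>a\<in>U. \<forall>b\<in>U. w a \<bullet> Dm a b + w b \<bullet> Dp a b = q b - q a) \<and>
     (\<forall>a\<in>U. ((\<lambda>v. Dm a v) has_derivative (\<lambda>v. (1/2) *\<^sub>R (A a *v v))) (at a))"

end

theory Submission
  imports Defs
begin

text \<open>
  Testing the element equations with the entropy variables \<open>w(U\<^sub>i)\<close> and
  summing with the LGL weights, the summation-by-parts property
  \<open>\<omega>\<^sub>i D\<^sub>i\<^sub>m + \<omega>\<^sub>m D\<^sub>m\<^sub>i = B\<^sub>i\<^sub>m\<close> together with (C1), (C3), (C4) turns the volume terms into the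
  telescoping sum \<open>q(U\<^sub>N) - q(U\<^sub>0)\<close>; applying (C4) once more at the left interface leaves exactly
  the two numerical entropy fluxes. Summation by parts is checked on the explicit form of the LGL
  differentiation matrix, which needs that the nodes are the \<open>N + 1\<close> distinct zeros of
  \<open>(1 - x\<^sup>2) P\<^sub>N'\<close>; this follows from the interlacing of the zeros of consecutive Legendre
  polynomials.

  The accuracy hypothesis applied to monomials forces each row of \<open>D\<close> to be exact on
  polynomials of degree \<open>\<le> p\<close>. Taylor-expanding \<open>t \<mapsto> D\<^sup>-(u(y), u(t))\<close> at the nodes, exactness
  makes the stencil reproduce \<open>2 \<partial>\<^sub>t D\<^sup>-(u(y), u(t))\<close> at \<open>t = y\<close>, which is \<open>A(u(y)) u'(y)\<close> by (C5),
  up to a Taylor remainder of order \<open>h\<^sup>p\<close>. The derivatives of all orders in \<open>t\<close>, jointly continuous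
  in \<open>(y, t)\<close>, come from a Faa di Bruno expansion of the smooth fluctuation along the curve.
\<close>

section \<open>Legendre polynomials and their zeros\<close>

lemma poly_legendre_Suc_Suc:
  "poly (legendre (Suc (Suc n))) x =
     ((2 * real n + 3) * x * poly (legendre (Suc n)) x - (real n + 1) * poly (legendre n) x)
       / (real n + 2)"
  by (simp add: field_simps)

lemma poly_pderiv_legendre_Suc_Suc:
  "poly (pderiv (legendre (Suc (Suc n)))) x =
     ((2 * real n + 3) * (poly (legendre (Suc n)) x + x * poly (pderiv (legendre (Suc n))) x)
       - (real n + 1) * poly (pderiv (legendre n)) x) / (real n + 2)"
  by (simp add: pderiv_smult pderiv_diff pderiv_mult pderiv_pCons field_simps)

lemma legendre_pderiv_identities:
  "x * poly (pderiv (legendre (Suc n))) x - poly (pderiv (legendre n)) x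
      = (real n + 1) * poly (legendre (Suc n)) x
   \<and> (1 - x\<^sup>2) * poly (pderiv (legendre (Suc n))) x
      = (real n + 1) * (poly (legendre n) x - x * poly (legendre (Suc n)) x)"
proof (induction n)
  case 0
  then show ?case by (simp add: power2_eq_square pderiv_pCons)
next
  case (Suc m)
  define p0 p1 p2 where "p0 = poly (legendre m) x" and "p1 = poly (legendre (Suc m)) x"
    and "p2 = poly (legendre (Suc (Suc m))) x"
  define d0 d1 d2 where "d0 = poly (pderiv (legendre m)) x"
    and "d1 = poly (pderiv (legendre (Suc m))) x" and "d2 = poly (pderiv (legendre (Suc (Suc m)))) x"
  have rec: "(real m + 2) * p2 = (2 * real m + 3) * x * p1 - (real m + 1) * p0"
    unfolding p0_def p1_def p2_def poly_legendre_Suc_Suc by (simp add: field_simps)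
  have rec': "(real m + 2) * d2 = (2 * real m + 3) * (p1 + x * d1) - (real m + 1) * d0"
    unfolding d0_def d1_def d2_def p1_def poly_pderiv_legendre_Suc_Suc by (simp add: field_simps)
  have IH1: "x * d1 - d0 = (real m + 1) * p1" and IH2: "(1 - x\<^sup>2) * d1 = (real m + 1) * (p0 - x * p1)"
    using Suc.IH unfolding p0_def p1_def d0_def d1_def by simp_all
  have "(real m + 2) * d2 = (real m + 2) * (x * d1 + (real m + 2) * p1)"
    using rec' IH1 by algebra
  then have d2: "d2 = x * d1 + (real m + 2) * p1" by simp
  have "(real m + 2) * (x * d2 - d1) = (real m + 2) * ((real (Suc m) + 1) * p2)"
    using d2 IH2 rec by (simp add: power2_eq_square) algebra
  moreover have "(real m + 2) * ((1 - x\<^sup>2) * d2) = (real m + 2) * ((real (Suc m) + 1) * (p1 - x * p2))"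
    using d2 IH2 rec by (simp add: power2_eq_square) algebra
  ultimately have "x * d2 - d1 = (real (Suc m) + 1) * p2"
    and "(1 - x\<^sup>2) * d2 = (real (Suc m) + 1) * (p1 - x * p2)"
    by (simp_all only: mult_cancel_left) simp_all
  then show ?case unfolding p1_def p2_def d1_def d2_def by blast
qed

definition lgl_node_poly :: "nat \<Rightarrow> real poly" where
  "lgl_node_poly N = [:1, 0, -1:] * pderiv (legendre N)"

lemma poly_lgl_node_poly: "poly (lgl_node_poly N) x = (1 - x\<^sup>2) * poly (pderiv (legendre N)) x"
  unfolding lgl_node_poly_def by (simp add: power2_eq_square algebra_simps)

lemma pderiv_lgl_node_poly:
  "pderiv (lgl_node_poly n) = smult (- (real n * (real n + 1))) (legendre n)"
proof (cases n)
  case 0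
  then show ?thesis by (simp add: lgl_node_poly_def)
next
  case (Suc m)
  have "poly (lgl_node_poly n) x = poly (smult (real m + 1) (legendre m - pCons 0 (legendre (Suc m)))) x"
    for x using conjunct2[OF legendre_pderiv_identities[of x m]]
    by (simp add: Suc poly_lgl_node_poly algebra_simps)
  then have weighted: "lgl_node_poly n = smult (real m + 1) (legendre m - pCons 0 (legendre (Suc m)))"
    using poly_eq_poly_eq_iff by blast
  have "poly (pderiv (lgl_node_poly n)) x = poly (smult (- (real n * (real n + 1))) (legendre n)) x"
    for x using conjunct1[OF legendre_pderiv_identities[of x m]] unfolding weighted
    by (simp add: Suc pderiv_smult pderiv_diff pderiv_pCons algebra_simps)
  then show ?thesis using poly_eq_poly_eq_iff by blast
qed

lemma legendre_at_1: "poly (legendre n) 1 = 1"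
  by (induction n rule: legendre.induct) (simp_all add: poly_legendre_Suc_Suc field_simps)

lemma legendre_at_minus_1: "poly (legendre n) (-1) = (-1) ^ n"
  by (induction n rule: legendre.induct) (simp_all add: poly_legendre_Suc_Suc field_simps)

lemma pderiv_legendre_at_pm1:
  "poly (pderiv (legendre n)) 1 = real n * (real n + 1) / 2"
  "poly (pderiv (legendre n)) (-1) = - ((-1) ^ n * (real n * (real n + 1)) / 2)"
proof -
  have expand: "poly (pderiv (lgl_node_poly n)) x
      = (1 - x * x) * poly (pderiv (pderiv (legendre n))) x - 2 * x * poly (pderiv (legendre n)) x"
    for x unfolding lgl_node_poly_def pderiv_mult by (simp add: pderiv_pCons algebra_simps)
  have "2 * x * poly (pderiv (legendre n)) x = real n * (real n + 1) * poly (legendre n) x"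
    if "x * x = 1" for x
    using expand[of x] that by (simp add: pderiv_lgl_node_poly)
  from this[of 1] this[of "-1"]
  show "poly (pderiv (legendre n)) 1 = real n * (real n + 1) / 2"
    "poly (pderiv (legendre n)) (-1) = - ((-1) ^ n * (real n * (real n + 1)) / 2)"
    by (simp_all add: legendre_at_1 legendre_at_minus_1 field_simps)
qed

lemma legendre_degree_lead_coeff: "degree (legendre n) = n \<and> coeff (legendre n) n > 0"
proof (induction n rule: legendre.induct)
  case (3 n)
  let ?P = "legendre (Suc (Suc n))"
  have "coeff ?P (Suc (Suc n)) = (2 * real n + 3) * coeff (legendre (Suc n)) (Suc n) / (real n + 2)"
    using 3 by (simp add: coeff_eq_0 field_simps)
  then have pos: "coeff ?P (Suc (Suc n)) > 0" using 3 by simp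
  then have "Suc (Suc n) \<le> degree ?P" by (metis le_degree less_irrefl)
  moreover have "degree ?P \<le> Suc (Suc n)" using 3 by (simp add: degree_diff_le degree_pCons_le)
  ultimately show ?case using pos by simp
qed simp_all

lemma degree_legendre [simp]: "degree (legendre n) = n"
  using legendre_degree_lead_coeff by blast

lemma legendre_nonzero: "legendre n \<noteq> 0"
  using legendre_degree_lead_coeff[of n] by auto

text \<open>This positivity gives the simplicity of the zeros of \<open>P\<^sub>n\<close> and the interlacing of the zeros
  of \<open>P\<^sub>n\<close> and \<open>P\<^sub>n\<^sub>+\<^sub>1\<close>.\<close>

lemma legendre_wronskian_pos:
  "poly (pderiv (legendre (Suc m))) x * poly (legendre m) x
     - poly (legendre (Suc m)) x * poly (pderiv (legendre m)) x > 0"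
proof (induction m)
  case 0
  then show ?case by (simp add: pderiv_pCons)
next
  case (Suc m)
  define p0 p1 p2 where "p0 = poly (legendre m) x" and "p1 = poly (legendre (Suc m)) x"
    and "p2 = poly (legendre (Suc (Suc m))) x"
  define d0 d1 d2 where "d0 = poly (pderiv (legendre m)) x"
    and "d1 = poly (pderiv (legendre (Suc m))) x" and "d2 = poly (pderiv (legendre (Suc (Suc m)))) x"
  have rec: "(real m + 2) * p2 = (2 * real m + 3) * x * p1 - (real m + 1) * p0"
    unfolding p0_def p1_def p2_def poly_legendre_Suc_Suc by (simp add: field_simps)
  have rec': "(real m + 2) * d2 = (2 * real m + 3) * (p1 + x * d1) - (real m + 1) * d0"
    unfolding d0_def d1_def d2_def p1_def poly_pderiv_legendre_Suc_Suc by (simp add: field_simps)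
  have "(real m + 2) * (d2 * p1 - p2 * d1) = (2 * real m + 3) * p1\<^sup>2 + (real m + 1) * (d1 * p0 - p1 * d0)"
    using rec rec' by (simp add: power2_eq_square) algebra
  also have "\<dots> > 0"
    using Suc.IH unfolding p0_def p1_def d0_def d1_def by (intro add_nonneg_pos) simp_all
  finally show ?case unfolding p1_def p2_def d1_def d2_def by (simp add: zero_less_mult_iff)
qed


lemma poly_sign_after_root:
  fixes p :: "real poly"
  assumes root: "poly p a = 0" and "a < b"
    and no_root: "\<And>x. a < x \<Longrightarrow> x \<le> b \<Longrightarrow> poly p x \<noteq> 0"
  shows "poly (pderiv p) a * poly p b \<ge> 0"
proof (rule ccontr)
  assume neg: "\<not> ?thesis"
  define q where "q = smult (poly p b) p"
  have "poly (pderiv q) a < 0" using neg by (simp add: q_def pderiv_smult mult.commute)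
  then obtain e where e: "e > 0" "\<And>h. 0 < h \<Longrightarrow> h < e \<Longrightarrow> poly q (a + h) < poly q a"
    using DERIV_neg_dec_right[OF poly_DERIV] by blast
  define h where "h = min (e / 2) ((b - a) / 2)"
  have h: "0 < h" "h < e" "h < b - a" using e(1) \<open>a < b\<close> by (auto simp: h_def min_def field_simps)
  define c where "c = a + h"
  have c: "a < c" "c < b" using h by (simp_all add: c_def)
  have "poly q c < 0" using e(2)[OF h(1,2)] root by (simp add: q_def c_def)
  moreover have "poly q b > 0"
    using no_root[of b] \<open>a < b\<close> by (auto simp: q_def zero_less_mult_iff linorder_neq_iff)
  ultimately obtain x where "c < x" "x < b" "poly q x = 0" using poly_IVT_pos[OF c(2)] by blast
  then show False using no_root[of x] no_root[of b] c \<open>a < b\<close> by (simp add: q_def)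
qed

lemma poly_sign_before_root:
  fixes p :: "real poly"
  assumes root: "poly p b = 0" and "a < b"
    and no_root: "\<And>x. a \<le> x \<Longrightarrow> x < b \<Longrightarrow> poly p x \<noteq> 0"
  shows "poly (pderiv p) b * poly p a \<le> 0"
proof (rule ccontr)
  assume pos: "\<not> ?thesis"
  define q where "q = smult (poly p a) p"
  have "poly (pderiv q) b > 0" using pos by (simp add: q_def pderiv_smult mult.commute)
  then obtain e where e: "e > 0" "\<And>h. 0 < h \<Longrightarrow> h < e \<Longrightarrow> poly q (b - h) < poly q b"
    using DERIV_pos_inc_left[OF poly_DERIV] by blast
  define h where "h = min (e / 2) ((b - a) / 2)"
  have h: "0 < h" "h < e" "h < b - a" using e(1) \<open>a < b\<close> by (auto simp: h_def min_def field_simps)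
  define c where "c = b - h"
  have c: "a < c" "c < b" using h by (simp_all add: c_def)
  have "poly q c < 0" using e(2)[OF h(1,2)] root by (simp add: q_def c_def)
  moreover have "poly q a > 0"
    using no_root[of a] \<open>a < b\<close> by (auto simp: q_def zero_less_mult_iff linorder_neq_iff)
  ultimately obtain x where "a < x" "x < c" "poly q x = 0" using poly_IVT_neg[OF c(1)] by blast
  then show False using no_root[of x] no_root[of a] c \<open>a < b\<close> by (simp add: q_def)
qed

lemma pderiv_opposite_signs_at_consecutive_roots:
  fixes p :: "real poly"
  assumes "poly p a = 0" "poly p b = 0" "a < b"
    and no_root: "\<And>x. a < x \<Longrightarrow> x < b \<Longrightarrow> poly p x \<noteq> 0"
    and "poly (pderiv p) a \<noteq> 0" "poly (pderiv p) b \<noteq> 0"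
  shows "poly (pderiv p) a * poly (pderiv p) b < 0"
proof -
  define c where "c = (a + b) / 2"
  have c: "a < c" "c < b" using \<open>a < b\<close> by (auto simp: c_def)
  have "poly (pderiv p) a * poly p c \<ge> 0"
    using poly_sign_after_root[OF assms(1) c(1)] no_root c by auto
  moreover have "poly (pderiv p) b * poly p c \<le> 0"
    using poly_sign_before_root[OF assms(2) c(2)] no_root c by auto
  moreover have "poly p c \<noteq> 0" using no_root c by auto
  ultimately show ?thesis using assms(5,6)
    by (smt (verit) mult_neg_neg mult_pos_pos zero_less_mult_iff mult_less_0_iff)
qed

lemma card_poly_roots_ge_separated:
  fixes p :: "real poly" and y :: "nat \<Rightarrow> real"
  assumes "p \<noteq> 0" and y_less: "\<And>j. j < m \<Longrightarrow> y j < y (Suc j)"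
    and roots: "\<And>j. j < m \<Longrightarrow> \<exists>z. y j < z \<and> z < y (Suc j) \<and> poly p z = 0"
  shows "m \<le> card {x. poly p x = 0 \<and> y 0 < x \<and> x < y m}"
proof -
  have y_mono: "y j \<le> y k" if "j \<le> k" "k \<le> m" for j k
    using that
  proof (induction k)
    case (Suc k)
    then show ?case using y_less[of k] by (cases "j = Suc k") auto
  qed simp
  obtain z where z: "\<And>j. j < m \<Longrightarrow> y j < z j \<and> z j < y (Suc j) \<and> poly p (z j) = 0"
    using roots by metis
  have z_less: "z j < z k" if "j < k" "k < m" for j k
  proof -
    have "z j < y (Suc j)" using z[of j] that by simp
    also have "y (Suc j) \<le> y k" using that by (intro y_mono) auto
    also have "y k < z k" using z[of k] that by simp
    finally show ?thesis .
  qed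
  have "inj_on z {..<m}"
  proof (rule inj_onI)
    fix j k assume "j \<in> {..<m}" "k \<in> {..<m}" "z j = z k"
    then show "j = k" using z_less[of j k] z_less[of k j] by (cases j k rule: linorder_cases) auto
  qed
  moreover have "z ` {..<m} \<subseteq> {x. poly p x = 0 \<and> y 0 < x \<and> x < y m}"
  proof clarify
    fix j assume "j < m"
    then have "y 0 \<le> y j" "y (Suc j) \<le> y m" by (simp_all add: y_mono)
    then show "poly p (z j) = 0 \<and> y 0 < z j \<and> z j < y m" using z[OF \<open>j < m\<close>] by auto
  qed
  moreover have "finite {x. poly p x = 0 \<and> y 0 < x \<and> x < y m}"
    using poly_roots_finite[OF \<open>p \<noteq> 0\<close>] by (rule rev_finite_subset) auto
  ultimately show ?thesis using card_inj_on_le by fastforce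
qed

lemma strict_sorted_no_member_between:
  fixes xs :: "'a::linorder list"
  assumes "sorted_wrt (<) xs" "x \<in> set xs" "Suc i < length xs"
  shows "\<not> (xs ! i < x \<and> x < xs ! Suc i)"
proof -
  obtain k where k: "k < length xs" "x = xs ! k" using assms(2) by (auto simp: in_set_conv_nth)
  have "sorted xs" using assms(1) by (rule strict_sorted_imp_sorted)
  then have "x \<le> xs ! i \<or> xs ! Suc i \<le> x"
    using k assms(3) by (cases "k \<le> i") (auto simp: sorted_nth_mono)
  then show ?thesis by auto
qed

lemma legendre_root_simple: "poly (legendre n) x = 0 \<Longrightarrow> poly (pderiv (legendre n)) x \<noteq> 0"
proof (cases n)
  case (Suc m)
  then show "poly (legendre n) x = 0 \<Longrightarrow> ?thesis" using legendre_wronskian_pos[of m x] by auto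
qed simp

lemma legendre_Suc_sign_at_root:
  "poly (legendre n) x = 0 \<Longrightarrow> poly (legendre (Suc n)) x * poly (pderiv (legendre n)) x < 0"
  using legendre_wronskian_pos[of n x] by (simp add: algebra_simps)

lemma legendre_Suc_sign_change_between_roots:
  assumes "poly (legendre n) a = 0" "poly (legendre n) b = 0" "a < b"
    and "\<And>x. a < x \<Longrightarrow> x < b \<Longrightarrow> poly (legendre n) x \<noteq> 0"
  shows "poly (legendre (Suc n)) a * poly (legendre (Suc n)) b < 0"
  using pderiv_opposite_signs_at_consecutive_roots[OF assms
      legendre_root_simple[OF assms(1)] legendre_root_simple[OF assms(2)]]
    legendre_Suc_sign_at_root[OF assms(1)] legendre_Suc_sign_at_root[OF assms(2)]
  by (smt (verit) mult_less_0_iff zero_less_mult_iff)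

lemma legendre_Suc_sign_change_before_first_root:
  assumes "poly (legendre n) a = 0" "-1 < a" "\<And>x. -1 \<le> x \<Longrightarrow> x < a \<Longrightarrow> poly (legendre n) x \<noteq> 0"
  shows "poly (legendre (Suc n)) (-1) * poly (legendre (Suc n)) a < 0"
proof -
  have "poly (pderiv (legendre n)) a * poly (legendre n) (-1) \<le> 0"
    by (rule poly_sign_before_root[OF assms])
  moreover have "poly (legendre n) (-1) \<noteq> 0" "poly (legendre (Suc n)) (-1) = - poly (legendre n) (-1)"
    by (simp_all add: legendre_at_minus_1)
  ultimately show ?thesis
    using legendre_Suc_sign_at_root[OF assms(1)] legendre_root_simple[OF assms(1)]
    by (smt (verit) mult_less_0_iff zero_less_mult_iff)
qed

lemma legendre_Suc_sign_change_after_last_root: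
  assumes "poly (legendre n) b = 0" "b < 1" "\<And>x. b < x \<Longrightarrow> x \<le> 1 \<Longrightarrow> poly (legendre n) x \<noteq> 0"
  shows "poly (legendre (Suc n)) b * poly (legendre (Suc n)) 1 < 0"
proof -
  have "poly (pderiv (legendre n)) b * poly (legendre n) 1 \<ge> 0"
    by (rule poly_sign_after_root[OF assms])
  then show ?thesis
    using legendre_Suc_sign_at_root[OF assms(1)] legendre_root_simple[OF assms(1)]
    by (simp add: legendre_at_1) (smt (verit) mult_less_0_iff)
qed

lemma legendre_Suc_sign_changes:
  assumes "n \<ge> 1" and card: "card {x. poly (legendre n) x = 0} = n"
    and inside: "\<And>x. poly (legendre n) x = 0 \<Longrightarrow> -1 < x \<and> x < 1"
  shows "Suc n \<le> card {x. poly (legendre (Suc n)) x = 0 \<and> -1 < x \<and> x < 1}"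
proof -
  define P Q where "P = legendre n" and "Q = legendre (Suc n)"
  define xs where "xs = sorted_list_of_set {x. poly P x = 0}"
  have fin: "finite {x. poly P x = 0}" unfolding P_def by (rule poly_roots_finite[OF legendre_nonzero])
  have set_xs: "set xs = {x. poly P x = 0}" and len: "length xs = n" and sorted: "sorted_wrt (<) xs"
    using fin card by (simp_all add: xs_def P_def)
  have xs_root: "poly P (xs ! i) = 0" and xs_inside: "-1 < xs ! i \<and> xs ! i < 1" if "i < n" for i
    using set_xs len nth_mem[of i xs] that inside unfolding P_def by auto
  have xs_less: "xs ! i < xs ! j" if "i < j" "j < n" for i j
    using sorted len that by (simp add: sorted_wrt_nth_less)
  have bounds: "xs ! 0 \<le> x \<and> x \<le> xs ! (n - 1)" if "poly P x = 0" for x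
  proof -
    have "x \<in> set xs" using that set_xs by simp
    then obtain k where "k < n" "x = xs ! k" using len by (auto simp: in_set_conv_nth)
    then show ?thesis using strict_sorted_imp_sorted[OF sorted] len by (simp add: sorted_nth_mono)
  qed
  define y where "y j = (if j = 0 then -1 else if j \<le> n then xs ! (j - 1) else 1)" for j
  have y_less: "y j < y (Suc j)" if "j < Suc n" for j
    using that xs_inside[of 0] xs_inside[of "n - 1"] xs_less[of "j - 1" j] \<open>n \<ge> 1\<close>
    by (cases "j = 0"; cases "j = n") (auto simp: y_def)
  have Q_alternates: "poly Q (y j) * poly Q (y (Suc j)) < 0" if j: "j < Suc n" for j
  proof -
    consider "j = 0" | "0 < j" "j < n" | "j = n" using j by linarith
    then show ?thesis
    proof cases
      case 1
      have "poly Q (-1) * poly Q (xs ! 0) < 0"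
        using xs_root[of 0] xs_inside[of 0] bounds \<open>n \<ge> 1\<close> unfolding P_def Q_def
        by (intro legendre_Suc_sign_change_before_first_root) force+
      then show ?thesis using 1 \<open>n \<ge> 1\<close> by (simp add: y_def)
    next
      case 2
      have "poly Q (xs ! (j - 1)) * poly Q (xs ! j) < 0"
        using 2 xs_root xs_less strict_sorted_no_member_between[OF sorted, of _ "j - 1"] set_xs len
        unfolding P_def Q_def by (intro legendre_Suc_sign_change_between_roots) auto
      then show ?thesis using 2 by (simp add: y_def)
    next
      case 3
      have "poly Q (xs ! (n - 1)) * poly Q 1 < 0"
        using xs_root[of "n - 1"] xs_inside[of "n - 1"] bounds \<open>n \<ge> 1\<close> unfolding P_def Q_def
        by (intro legendre_Suc_sign_change_after_last_root) force+
      then show ?thesis using 3 \<open>n \<ge> 1\<close> by (simp add: y_def)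
    qed
  qed
  have "Suc n \<le> card {x. poly Q x = 0 \<and> y 0 < x \<and> x < y (Suc n)}"
    using y_less Q_alternates
    by (intro card_poly_roots_ge_separated poly_IVT) (simp_all add: Q_def legendre_nonzero)
  then show ?thesis by (simp add: y_def Q_def)
qed

lemma legendre_roots:
  "card {x. poly (legendre n) x = 0} = n \<and> (\<forall>x. poly (legendre n) x = 0 \<longrightarrow> -1 < x \<and> x < 1)"
proof (induction n)
  case (Suc n)
  show ?case
  proof (cases "n = 0")
    case True
    have "{x :: real. x = 0} = {0}" by auto
    then show ?thesis using True by simp
  next
    case False
    let ?R = "{x. poly (legendre (Suc n)) x = 0}"
    have fin: "finite ?R" by (rule poly_roots_finite[OF legendre_nonzero])
    have "Suc n \<le> card {x. poly (legendre (Suc n)) x = 0 \<and> -1 < x \<and> x < 1}"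
      using False Suc.IH by (intro legendre_Suc_sign_changes) auto
    moreover have "card ?R \<le> Suc n"
      using card_poly_roots_bound[OF legendre_nonzero] by simp
    moreover have sub: "{x. poly (legendre (Suc n)) x = 0 \<and> -1 < x \<and> x < 1} \<subseteq> ?R" by auto
    ultimately have "{x. poly (legendre (Suc n)) x = 0 \<and> -1 < x \<and> x < 1} = ?R"
      "card ?R = Suc n"
      using card_mono[OF fin sub] card_subset_eq[OF fin sub] by linarith+
    then show ?thesis by blast
  qed
qed simp

lemma poly_rolle:
  fixes p :: "real poly"
  assumes "a < b" "poly p a = poly p b"
  shows "\<exists>z. a < z \<and> z < b \<and> poly (pderiv p) z = 0"
proof -
  have "\<exists>z>a. z < b \<and> (poly p has_real_derivative 0) (at z)"
    by (rule Rolle[OF assms]) (auto intro: continuous_intros poly_DERIV)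
  then obtain z where z: "a < z" "z < b" "(poly p has_real_derivative 0) (at z)" by blast
  then show ?thesis using DERIV_unique[OF poly_DERIV z(3)] by blast
qed

lemma pderiv_legendre_roots:
  assumes "N \<ge> 1"
  shows "card {x. poly (pderiv (legendre N)) x = 0} = N - 1"
    and "poly (pderiv (legendre N)) x = 0 \<Longrightarrow> -1 < x \<and> x < 1"
proof -
  define P where "P = legendre N"
  define xs where "xs = sorted_list_of_set {x. poly P x = 0}"
  have fin: "finite {x. poly P x = 0}" unfolding P_def by (rule poly_roots_finite[OF legendre_nonzero])
  have set_xs: "set xs = {x. poly P x = 0}" and len: "length xs = N" and sorted: "sorted_wrt (<) xs"
    using fin legendre_roots[of N] by (simp_all add: xs_def P_def)
  have xs_root: "poly P (xs ! i) = 0" and xs_inside: "-1 < xs ! i \<and> xs ! i < 1" if "i < N" for i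
    using set_xs len nth_mem[of i xs] that legendre_roots[of N] unfolding P_def by auto
  have dP: "pderiv P \<noteq> 0" using \<open>N \<ge> 1\<close> by (simp add: P_def pderiv_eq_0_iff)
  let ?R = "{x. poly (pderiv P) x = 0}"
  let ?R' = "{x. poly (pderiv P) x = 0 \<and> xs ! 0 < x \<and> x < xs ! (N - 1)}"
  have fin': "finite ?R" by (rule poly_roots_finite[OF dP])
  have "N - 1 \<le> card ?R'"
  proof (rule card_poly_roots_ge_separated[OF dP])
    fix j assume "j < N - 1"
    then show "xs ! j < xs ! Suc j" using sorted len by (simp add: sorted_wrt_nth_less)
    then show "\<exists>z. xs ! j < z \<and> z < xs ! Suc j \<and> poly (pderiv P) z = 0"
      using \<open>j < N - 1\<close> xs_root[of j] xs_root[of "Suc j"] by (intro poly_rolle) simp_all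
  qed
  moreover have "card ?R \<le> N - 1"
    using card_poly_roots_bound[OF dP] by (simp add: P_def degree_pderiv)
  moreover have sub: "?R' \<subseteq> ?R" by auto
  ultimately have R_eq: "?R' = ?R" and "card ?R = N - 1"
    using card_mono[OF fin' sub] card_subset_eq[OF fin' sub] by linarith+
  then show "card {x. poly (pderiv (legendre N)) x = 0} = N - 1" by (simp add: P_def)
  show "-1 < x \<and> x < 1" if "poly (pderiv (legendre N)) x = 0"
  proof -
    have "x \<in> ?R'" using that R_eq by (simp add: P_def)
    then show ?thesis using xs_inside[of 0] xs_inside[of "N - 1"] \<open>N \<ge> 1\<close> by auto
  qed
qed

section \<open>LGL nodes and the differentiation matrix\<close>

lemma lgl_node_poly_roots:
  "{x. poly (lgl_node_poly N) x = 0} = insert (-1) (insert 1 {x. poly (pderiv (legendre N)) x = 0})"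
proof -
  have "1 - x\<^sup>2 = 0 \<longleftrightarrow> x = -1 \<or> x = 1" for x :: real
    by (metis abs_one power2_eq_1_iff right_minus_eq)
  then show ?thesis unfolding poly_lgl_node_poly mult_eq_0_iff by blast
qed

lemma lgl_node_poly_root_bounds:
  assumes "N \<ge> 1" "poly (lgl_node_poly N) x = 0"
  shows "-1 \<le> x \<and> x \<le> 1"
proof -
  have "x = -1 \<or> x = 1 \<or> poly (pderiv (legendre N)) x = 0"
    using assms(2) lgl_node_poly_roots[of N] by blast
  then show ?thesis using pderiv_legendre_roots(2)[OF assms(1), of x] by auto
qed

lemma card_lgl_node_poly_roots:
  assumes "N \<ge> 1"
  shows "card {x. poly (lgl_node_poly N) x = 0} = Suc N"
proof -
  let ?R = "{x. poly (pderiv (legendre N)) x = 0}"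
  have "finite ?R" using assms by (intro poly_roots_finite) (simp add: pderiv_eq_0_iff)
  moreover have "1 \<notin> ?R" "-1 \<notin> ?R" using pderiv_legendre_roots(2)[OF assms] by force+
  ultimately show ?thesis
    using pderiv_legendre_roots(1)[OF assms] assms by (simp add: lgl_node_poly_roots)
qed

lemma degree_lgl_node_poly:
  assumes "N \<ge> 1"
  shows "degree (lgl_node_poly N) = Suc N"
proof -
  have "degree (lgl_node_poly N) = degree [:1, 0, -1 :: real:] + degree (pderiv (legendre N))"
    unfolding lgl_node_poly_def using assms by (intro degree_mult_eq) (simp_all add: pderiv_eq_0_iff)
  then show ?thesis using assms by (simp add: degree_pderiv)
qed

lemma lgl_node_poly_nonzero: "N \<ge> 1 \<Longrightarrow> lgl_node_poly N \<noteq> 0"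
  using degree_lgl_node_poly by fastforce

lemma poly_eq_smult_prod_roots:
  fixes p :: "real poly"
  assumes "p \<noteq> 0" "card {x. poly p x = 0} = degree p"
  shows "p = smult (lead_coeff p) (\<Prod>r\<in>{x. poly p x = 0}. [:-r, 1:])"
proof -
  define R where "R = {x. poly p x = 0}"
  have finR: "finite R" unfolding R_def by (rule poly_roots_finite[OF assms(1)])
  have "(\<Prod>r\<in>S. [:-r, 1:]) dvd p" if "S \<subseteq> R" for S
  proof -
    have "finite S" using finR that by (rule rev_finite_subset)
    then show ?thesis using that
    proof (induction S rule: finite_induct)
      case (insert a S)
      then obtain q where q: "p = (\<Prod>r\<in>S. [:-r, 1:]) * q" by (meson dvdE insert_subset)
      have "poly (\<Prod>r\<in>S. [:-r, 1:]) a \<noteq> 0"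
        using insert.hyps by (simp add: poly_prod prod_zero_iff)
      moreover have "poly p a = 0" using insert.prems by (simp add: R_def)
      ultimately have "poly q a = 0" using q by simp
      then obtain q' where q': "q = [:-a, 1:] * q'" by (metis dvdE poly_eq_0_iff_dvd)
      have "p = (\<Prod>r\<in>insert a S. [:-r, 1:]) * q'"
        unfolding prod.insert[OF insert.hyps] q q' by (simp only: mult_ac)
      then show ?case by (rule dvdI)
    qed simp
  qed
  then have "(\<Prod>r\<in>R. [:-r, 1:]) dvd p" by blast
  then obtain q where q: "p = (\<Prod>r\<in>R. [:-r, 1:]) * q" by (rule dvdE)
  have nonzero: "(\<Prod>r\<in>R. [:-r, 1:]) \<noteq> (0 :: real poly)" "q \<noteq> 0"
    using finR q assms(1) by (auto simp: prod_zero_iff)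
  have "degree p = degree (\<Prod>r\<in>R. [:-r, 1:]) + degree q"
    unfolding q using nonzero by (rule degree_mult_eq)
  also have "degree (\<Prod>r\<in>R. [:-r, 1:]) = card R"
    using finR by (subst degree_prod_eq_sum_degree) auto
  finally have "degree q = 0" using assms(2) by (simp add: R_def)
  then obtain c where "q = [:c:]" by (rule degree_eq_zeroE)
  then have "p = smult c (\<Prod>r\<in>R. [:-r, 1:])" using q by simp
  moreover have "lead_coeff (\<Prod>r\<in>R. [:-r, 1:]) = (1 :: real)" by (simp add: lead_coeff_prod)
  ultimately show ?thesis unfolding R_def[symmetric] by (metis lead_coeff_smult mult.right_neutral)
qed

locale lgl_grid =
  fixes N :: nat
  assumes N_pos: "N \<ge> 1"
begin

abbreviation xi :: "nat \<Rightarrow> real" where "xi \<equiv> lgl_node N"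

abbreviation lgl_roots :: "real set" where "lgl_roots \<equiv> {x. poly (lgl_node_poly N) x = 0}"

lemma lgl_nodes_list:
  "set (sorted_list_of_set lgl_roots) = lgl_roots"
  "length (sorted_list_of_set lgl_roots) = Suc N"
  "sorted_wrt (<) (sorted_list_of_set lgl_roots)"
  "xi i = sorted_list_of_set lgl_roots ! i"
proof -
  have "finite lgl_roots" by (rule poly_roots_finite[OF lgl_node_poly_nonzero[OF N_pos]])
  then show "set (sorted_list_of_set lgl_roots) = lgl_roots"
    "length (sorted_list_of_set lgl_roots) = Suc N"
    "sorted_wrt (<) (sorted_list_of_set lgl_roots)"
    by (simp_all add: card_lgl_node_poly_roots[OF N_pos])
  show "xi i = sorted_list_of_set lgl_roots ! i" by (simp add: lgl_node_def lgl_node_poly_def)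
qed

lemma lgl_node_less: "i < j \<Longrightarrow> j \<le> N \<Longrightarrow> xi i < xi j"
  unfolding lgl_nodes_list(4) using lgl_nodes_list(2,3) by (simp add: sorted_wrt_nth_less)

lemma lgl_node_eq_iff: "i \<le> N \<Longrightarrow> j \<le> N \<Longrightarrow> xi i = xi j \<longleftrightarrow> i = j"
  using lgl_node_less[of i j] lgl_node_less[of j i] by (cases i j rule: linorder_cases) auto

lemma lgl_node_image: "lgl_roots = xi ` {0..N}"
proof -
  define xs where "xs = sorted_list_of_set lgl_roots"
  have "set xs = (\<lambda>i. xs ! i) ` {0..N}"
    using lgl_nodes_list(2) by (auto simp: xs_def set_conv_nth image_def less_Suc_eq_le)
  then show ?thesis using lgl_nodes_list(1,4) by (simp add: xs_def)
qed

lemma lgl_node_root: "i \<le> N \<Longrightarrow> poly (lgl_node_poly N) (xi i) = 0"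
  using lgl_node_image by auto

lemma lgl_node_root_cases:
  "i \<le> N \<Longrightarrow> xi i = -1 \<or> xi i = 1 \<or> poly (pderiv (legendre N)) (xi i) = 0"
  using lgl_node_root[of i] lgl_node_poly_roots[of N] by blast

lemma lgl_node_0: "xi 0 = -1"
proof -
  have "-1 \<in> lgl_roots" using lgl_node_poly_roots[of N] by blast
  then obtain k where "k \<le> N" "xi k = -1" unfolding lgl_node_image by auto
  then have "xi 0 \<le> -1" using lgl_node_less[of 0 k] by (cases "k = 0") auto
  then show ?thesis using lgl_node_poly_root_bounds[OF N_pos lgl_node_root[of 0]] by simp
qed

lemma lgl_node_N: "xi N = 1"
proof -
  have "1 \<in> lgl_roots" using lgl_node_poly_roots[of N] by blast
  then obtain k where "k \<le> N" "xi k = 1" unfolding lgl_node_image by auto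
  then have "1 \<le> xi N" using lgl_node_less[of k N] by (cases "k = N") auto
  then show ?thesis using lgl_node_poly_root_bounds[OF N_pos lgl_node_root[of N]] by simp
qed

lemma pderiv_legendre_lgl_node: "0 < i \<Longrightarrow> i < N \<Longrightarrow> poly (pderiv (legendre N)) (xi i) = 0"
  using lgl_node_root_cases[of i] lgl_node_less[of 0 i] lgl_node_less[of i N] lgl_node_0 lgl_node_N
  by auto

definition nodal_poly :: "real poly" where
  "nodal_poly = (\<Prod>k\<in>{0..N}. [:- xi k, 1:])"

definition nodal_poly_except :: "nat \<Rightarrow> real poly" where
  "nodal_poly_except j = (\<Prod>k\<in>{0..N} - {j}. [:- xi k, 1:])"

definition nodal_scale :: real where
  "nodal_scale = - (real N * (real N + 1)) / lead_coeff (lgl_node_poly N)"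

lemma nodal_scale_nonzero: "nodal_scale \<noteq> 0"
  using N_pos lgl_node_poly_nonzero[OF N_pos] by (simp add: nodal_scale_def)

lemma pderiv_nodal_poly: "pderiv nodal_poly = smult nodal_scale (legendre N)"
proof -
  define c where "c = lead_coeff (lgl_node_poly N)"
  have c: "c \<noteq> 0" using lgl_node_poly_nonzero[OF N_pos] by (simp add: c_def)
  have "lgl_node_poly N = smult c (\<Prod>r\<in>lgl_roots. [:-r, 1:])"
    unfolding c_def using lgl_node_poly_nonzero[OF N_pos]
    by (rule poly_eq_smult_prod_roots)
      (simp add: card_lgl_node_poly_roots[OF N_pos] degree_lgl_node_poly[OF N_pos])
  also have "(\<Prod>r\<in>lgl_roots. [:-r, 1:]) = nodal_poly"
    unfolding lgl_node_image nodal_poly_def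
    by (rule prod.reindex_cong[of xi]) (auto simp: inj_on_def lgl_node_eq_iff)
  finally have "smult c (pderiv nodal_poly) = smult (- (real N * (real N + 1))) (legendre N)"
    using pderiv_lgl_node_poly[of N] by (simp add: pderiv_smult)
  then have "smult (1 / c) (smult c (pderiv nodal_poly)) = smult (1 / c) (smult (- (real N * (real N + 1))) (legendre N))"
    by simp
  then show ?thesis using c by (simp add: nodal_scale_def c_def)
qed

lemma nodal_poly_split: "j \<le> N \<Longrightarrow> nodal_poly = [:- xi j, 1:] * nodal_poly_except j"
  unfolding nodal_poly_def nodal_poly_except_def by (subst prod.remove[of _ j]) auto

lemma pderiv_nodal_poly_split:
  assumes "j \<le> N"
  shows "pderiv nodal_poly = nodal_poly_except j + [:- xi j, 1:] * pderiv (nodal_poly_except j)"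
proof -
  have "pderiv [:- xi j, 1:] = 1" by (simp add: pderiv_pCons)
  then show ?thesis by (simp only: nodal_poly_split[OF assms] pderiv_mult mult_1_right add.commute)
qed

lemma poly_nodal_poly_except_self:
  "j \<le> N \<Longrightarrow> poly (nodal_poly_except j) (xi j) = (\<Prod>k\<in>{0..N} - {j}. xi j - xi k)"
  unfolding nodal_poly_except_def by (simp add: poly_prod)

lemma poly_nodal_poly_except_self_nonzero: "j \<le> N \<Longrightarrow> poly (nodal_poly_except j) (xi j) \<noteq> 0"
  by (simp add: poly_nodal_poly_except_self lgl_node_eq_iff)

lemma poly_nodal_poly_except_other: "i \<le> N \<Longrightarrow> i \<noteq> j \<Longrightarrow> poly (nodal_poly_except j) (xi i) = 0"
  unfolding nodal_poly_except_def poly_prod by (rule prod_zero) auto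

lemma poly_pderiv_nodal_poly:
  assumes "j \<le> N"
  shows "poly (pderiv nodal_poly) x = poly (nodal_poly_except j) x + (x - xi j) * poly (pderiv (nodal_poly_except j)) x"
  unfolding pderiv_nodal_poly_split[OF assms] by (simp add: algebra_simps)

lemma poly_pderiv_nodal_poly_at_node:
  "j \<le> N \<Longrightarrow> poly (pderiv nodal_poly) (xi j) = poly (nodal_poly_except j) (xi j)"
  by (simp add: poly_pderiv_nodal_poly)

lemma legendre_lgl_node_nonzero: "j \<le> N \<Longrightarrow> poly (legendre N) (xi j) \<noteq> 0"
  using poly_pderiv_nodal_poly_at_node[of j] poly_nodal_poly_except_self_nonzero[of j]
  by (auto simp: pderiv_nodal_poly)

lemma lgl_D_eq:
  "j \<le> N \<Longrightarrow> lgl_D N i j = poly (pderiv (nodal_poly_except j)) (xi i) / poly (nodal_poly_except j) (xi j)"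
proof -
  assume "j \<le> N"
  have "lagrange_basis N j = smult (\<Prod>k\<in>{0..N} - {j}. 1 / (xi j - xi k)) (nodal_poly_except j)"
    unfolding lagrange_basis_def nodal_poly_except_def by (rule prod_smult)
  also have "(\<Prod>k\<in>{0..N} - {j}. 1 / (xi j - xi k)) = 1 / poly (nodal_poly_except j) (xi j)"
    using \<open>j \<le> N\<close> by (simp add: poly_nodal_poly_except_self prod_dividef)
  finally show ?thesis by (simp add: lgl_D_def pderiv_smult)
qed

lemma poly_nodal_poly_except_at_node:
  "j \<le> N \<Longrightarrow> poly (nodal_poly_except j) (xi j) = nodal_scale * poly (legendre N) (xi j)"
  using poly_pderiv_nodal_poly_at_node by (simp add: pderiv_nodal_poly)

lemma lgl_D_off_diagonal:
  assumes "i \<le> N" "j \<le> N" "i \<noteq> j"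
  shows "lgl_D N i j = poly (legendre N) (xi i) / ((xi i - xi j) * poly (legendre N) (xi j))"
proof -
  have "xi i - xi j \<noteq> 0" using assms by (simp add: lgl_node_eq_iff)
  have "nodal_scale * poly (legendre N) (xi i) = (xi i - xi j) * poly (pderiv (nodal_poly_except j)) (xi i)"
    using poly_pderiv_nodal_poly[OF assms(2), of "xi i"] poly_nodal_poly_except_other[OF assms(1,3)]
    by (simp add: pderiv_nodal_poly)
  then have d: "poly (pderiv (nodal_poly_except j)) (xi i) = nodal_scale * poly (legendre N) (xi i) / (xi i - xi j)"
    using \<open>xi i - xi j \<noteq> 0\<close> by (simp add: field_simps)
  show ?thesis
    unfolding lgl_D_eq[OF assms(2)] poly_nodal_poly_except_at_node[OF assms(2)] d
    using nodal_scale_nonzero legendre_lgl_node_nonzero[OF assms(2)] by simp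
qed

lemma lgl_D_diagonal:
  assumes "j \<le> N"
  shows "lgl_D N j j = poly (pderiv (legendre N)) (xi j) / (2 * poly (legendre N) (xi j))"
proof -
  have "poly (pderiv (pderiv nodal_poly)) x
      = 2 * poly (pderiv (nodal_poly_except j)) x + (x - xi j) * poly (pderiv (pderiv (nodal_poly_except j))) x"
    for x unfolding pderiv_nodal_poly_split[OF assms] pderiv_add pderiv_mult
    by (simp add: pderiv_pCons algebra_simps)
  from this[of "xi j"]
  have d: "poly (pderiv (nodal_poly_except j)) (xi j) = nodal_scale * poly (pderiv (legendre N)) (xi j) / 2"
    by (simp add: pderiv_nodal_poly pderiv_smult)
  show ?thesis
    unfolding lgl_D_eq[OF assms] poly_nodal_poly_except_at_node[OF assms] d
    using nodal_scale_nonzero legendre_lgl_node_nonzero[OF assms] by simp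
qed

lemma lgl_sbp_off_diagonal:
  assumes "i \<le> N" "j \<le> N" "i \<noteq> j"
  shows "lgl_weight N i * lgl_D N i j + lgl_weight N j * lgl_D N j i = 0"
proof -
  define M where "M = real N * (real N + 1)"
  have "M \<noteq> 0" "xi i - xi j \<noteq> 0" using N_pos assms by (simp_all add: M_def lgl_node_eq_iff)
  then show ?thesis
    using legendre_lgl_node_nonzero[OF assms(1)] legendre_lgl_node_nonzero[OF assms(2)]
    unfolding lgl_D_off_diagonal[OF assms] lgl_D_off_diagonal[OF assms(2,1) assms(3)[symmetric]]
      lgl_weight_def M_def[symmetric]
    by (simp add: field_simps power2_eq_square)
qed

lemma lgl_sbp_diagonal:
  assumes "j \<le> N"
  shows "2 * (lgl_weight N j * lgl_D N j j) = (if j = N then 1 else if j = 0 then -1 else 0)"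
proof -
  have "N \<noteq> 0" using N_pos by simp
  consider "j = N" | "j = 0" | "0 < j" "j < N" using assms N_pos by linarith
  then show ?thesis
  proof cases
    case 1
    then show ?thesis using \<open>N \<noteq> 0\<close>
      by (simp add: lgl_D_diagonal lgl_weight_def lgl_node_N legendre_at_1 pderiv_legendre_at_pm1)
  next
    case 2
    define M s where "M = real N * (real N + 1)" and "s = (-1 :: real) ^ N"
    have "M \<noteq> 0" "s \<noteq> 0" "s * s = 1"
      using \<open>N \<noteq> 0\<close> by (simp_all add: M_def s_def flip: power_add)
    then have "2 * (2 / (M * s\<^sup>2) * (- (s * M / 2) / (2 * s))) = -1"
      by (simp add: power2_eq_square field_simps)
    then show ?thesis using 2 \<open>N \<noteq> 0\<close>
      by (simp add: lgl_D_diagonal lgl_weight_def lgl_node_0 legendre_at_minus_1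
          pderiv_legendre_at_pm1 M_def s_def)
  next
    case 3
    then show ?thesis by (simp add: lgl_D_diagonal pderiv_legendre_lgl_node)
  qed
qed

end

section \<open>Summation by parts and entropy conservation\<close>

definition sbp_boundary :: "nat \<Rightarrow> nat \<Rightarrow> real" where
  "sbp_boundary N i = (if i = N then 1 else if i = 0 then -1 else 0)"

definition summation_by_parts :: "nat \<Rightarrow> (nat \<Rightarrow> real) \<Rightarrow> (nat \<Rightarrow> nat \<Rightarrow> real) \<Rightarrow> bool" where
  "summation_by_parts N \<omega> D \<longleftrightarrow>
     (\<forall>i\<le>N. \<forall>j\<le>N. \<omega> i * D i j + \<omega> j * D j i = (if i = j then sbp_boundary N i else 0))"

lemma lgl_summation_by_parts: "N \<ge> 1 \<Longrightarrow> summation_by_parts N (lgl_weight N) (lgl_D N)"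
proof -
  assume "N \<ge> 1"
  then interpret lgl_grid N by unfold_locales
  show ?thesis
    unfolding summation_by_parts_def
  proof (intro allI impI)
    fix i j assume "i \<le> N" "j \<le> N"
    then show "lgl_weight N i * lgl_D N i j + lgl_weight N j * lgl_D N j i
        = (if i = j then sbp_boundary N i else 0)"
      using lgl_sbp_diagonal[of i] lgl_sbp_off_diagonal[of i j] by (cases "i = j") (simp_all add: sbp_boundary_def)
  qed
qed

lemma summation_by_parts_column_sums:
  assumes sbp: "summation_by_parts N \<omega> D" and rows: "\<And>i. i \<le> N \<Longrightarrow> (\<Sum>j\<le>N. D i j) = 0"
    and "j \<le> N"
  shows "(\<Sum>i\<le>N. \<omega> i * D i j) = sbp_boundary N j"
proof -
  have "(\<Sum>i\<le>N. \<omega> i * D i j) = (\<Sum>i\<le>N. (if j = i then sbp_boundary N j else 0) - \<omega> j * D j i)"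
    using sbp \<open>j \<le> N\<close> unfolding summation_by_parts_def by (intro sum.cong) (auto simp: algebra_simps)
  also have "\<dots> = sbp_boundary N j"
    using rows[OF \<open>j \<le> N\<close>] \<open>j \<le> N\<close> by (simp add: sum_subtractf flip: sum_distrib_left)
  finally show ?thesis .
qed

lemma sum_sbp_boundary: "N \<ge> 1 \<Longrightarrow> (\<Sum>j\<le>N. sbp_boundary N j * f j) = f N - f 0"
proof -
  assume "N \<ge> 1"
  then have "(\<Sum>j\<le>N. sbp_boundary N j * f j) = (\<Sum>j\<le>N. (if j = N then f N else 0) - (if j = 0 then f 0 else 0))"
    by (intro sum.cong) (auto simp: sbp_boundary_def)
  then show ?thesis by (simp add: sum_subtractf)
qed

lemma summation_by_parts_telescopes:
  fixes X :: "nat \<Rightarrow> nat \<Rightarrow> real" and q :: "nat \<Rightarrow> real"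
  assumes "N \<ge> 1" and sbp: "summation_by_parts N \<omega> D"
    and rows: "\<And>i. i \<le> N \<Longrightarrow> (\<Sum>j\<le>N. D i j) = 0"
    and diag: "\<And>i. i \<le> N \<Longrightarrow> X i i = 0"
    and skew: "\<And>i j. i \<le> N \<Longrightarrow> j \<le> N \<Longrightarrow> X i j - X j i = q j - q i"
  shows "(\<Sum>i\<le>N. \<Sum>j\<le>N. 2 * (\<omega> i * D i j) * X i j) = q N - q 0"
proof -
  define a where "a i j = \<omega> i * D i j" for i j
  have pair: "a i j * X i j + a j i * X j i = a i j * (q j - q i)" if "i \<le> N" "j \<le> N" for i j
  proof (cases "i = j")
    case True
    then show ?thesis using diag[OF that(1)] by simp
  next
    case False
    then have "a i j + a j i = 0" using sbp that by (simp add: summation_by_parts_def a_def)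
    then have "a j i = - a i j" by (simp add: eq_neg_iff_add_eq_0 add.commute)
    then have "a i j * X i j + a j i * X j i = a i j * (X i j - X j i)" by (simp add: algebra_simps)
    then show ?thesis using skew[OF that] by simp
  qed
  have "(\<Sum>i\<le>N. \<Sum>j\<le>N. 2 * a i j * X i j) = 2 * (\<Sum>i\<le>N. \<Sum>j\<le>N. a i j * X i j)"
    by (simp add: sum_distrib_left mult.assoc)
  also have "\<dots> = (\<Sum>i\<le>N. \<Sum>j\<le>N. a i j * X i j) + (\<Sum>i\<le>N. \<Sum>j\<le>N. a j i * X j i)"
    using sum.swap[of "\<lambda>i j. a i j * X i j" "{..N}" "{..N}"] by simp
  also have "\<dots> = (\<Sum>i\<le>N. \<Sum>j\<le>N. a i j * (q j - q i))"
    by (simp add: pair flip: sum.distrib)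
  also have "\<dots> = (\<Sum>i\<le>N. \<Sum>j\<le>N. a i j * q j) - (\<Sum>i\<le>N. q i * (\<Sum>j\<le>N. a i j))"
    by (simp add: algebra_simps sum_subtractf sum_distrib_left)
  also have "(\<Sum>i\<le>N. \<Sum>j\<le>N. a i j * q j) = (\<Sum>j\<le>N. sbp_boundary N j * q j)"
    by (subst sum.swap) (simp add: a_def summation_by_parts_column_sums[OF sbp rows] flip: sum_distrib_right)
  also have "(\<Sum>i\<le>N. q i * (\<Sum>j\<le>N. a i j)) = 0"
    using rows by (simp add: a_def flip: sum_distrib_left)
  finally show ?thesis using sum_sbp_boundary[OF \<open>N \<ge> 1\<close>] by (simp add: a_def)
qed

lemma flux_differencing_entropy_balance:
  fixes Dm Dp :: "'a::real_inner \<Rightarrow> 'a \<Rightarrow> 'a" and w :: "'a \<Rightarrow> 'a" and q :: "'a \<Rightarrow> real"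
    and u u' :: "nat \<Rightarrow> 'a" and uL uR :: 'a
  assumes "N \<ge> 1" and sbp: "summation_by_parts N \<omega> D"
    and rows: "\<And>i. i \<le> N \<Longrightarrow> (\<Sum>m\<le>N. D i m) = 0"
    and C1: "\<And>a. a \<in> U \<Longrightarrow> Dm a a = 0"
    and C3: "\<And>a b. a \<in> U \<Longrightarrow> b \<in> U \<Longrightarrow> Dm a b + Dp b a = 0"
    and C4: "\<And>a b. a \<in> U \<Longrightarrow> b \<in> U \<Longrightarrow> w a \<bullet> Dm a b + w b \<bullet> Dp a b = q b - q a"
    and u: "\<And>i. i \<le> N \<Longrightarrow> u i \<in> U" and uL: "uL \<in> U"
    and scheme: "\<And>i. i \<le> N \<Longrightarrow>
      (\<omega> i * J) *\<^sub>R u' i + \<omega> i *\<^sub>R (\<Sum>m\<le>N. (2 * D i m) *\<^sub>R Dm (u i) (u m))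
      + (if i = 0 then Dp uL (u 0) else 0) + (if i = N then Dm (u N) uR else 0) = 0"
  shows "(\<Sum>i\<le>N. \<omega> i * J * (w (u i) \<bullet> u' i))
    = (q uL + w uL \<bullet> Dm uL (u 0)) - (q (u N) + w (u N) \<bullet> Dm (u N) uR)"
proof -
  define X where "X i m = w (u i) \<bullet> Dm (u i) (u m)" for i m
  have volume: "(\<Sum>i\<le>N. \<Sum>m\<le>N. 2 * (\<omega> i * D i m) * X i m) = q (u N) - q (u 0)"
  proof (rule summation_by_parts_telescopes[OF \<open>N \<ge> 1\<close> sbp rows])
    show "X i i = 0" if "i \<le> N" for i using C1[OF u[OF that]] by (simp add: X_def)
    show "X i m - X m i = q (u m) - q (u i)" if "i \<le> N" "m \<le> N" for i m
      using C4[OF u u, OF that] C3[OF u u, OF that(2,1)]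
      by (simp add: X_def eq_neg_iff_add_eq_0[symmetric] inner_minus_right)
  qed
  have node: "\<omega> i * J * (w (u i) \<bullet> u' i)
      = - (\<Sum>m\<le>N. 2 * (\<omega> i * D i m) * X i m) - (if i = 0 then w (u 0) \<bullet> Dp uL (u 0) else 0)
        - (if i = N then w (u N) \<bullet> Dm (u N) uR else 0)" if "i \<le> N" for i
  proof -
    have "\<omega> i * J * (w (u i) \<bullet> u' i) = w (u i) \<bullet> ((\<omega> i * J) *\<^sub>R u' i)" by simp
    also have "(\<omega> i * J) *\<^sub>R u' i = - (\<omega> i *\<^sub>R (\<Sum>m\<le>N. (2 * D i m) *\<^sub>R Dm (u i) (u m)))
        - (if i = 0 then Dp uL (u 0) else 0) - (if i = N then Dm (u N) uR else 0)"
      using scheme[OF that] by (simp add: eq_neg_iff_add_eq_0 algebra_simps)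
    finally show ?thesis
      by (simp add: X_def inner_diff_right inner_sum_right sum_distrib_left mult.assoc
          mult.left_commute)
  qed
  have "(\<Sum>i\<le>N. \<omega> i * J * (w (u i) \<bullet> u' i))
      = - (q (u N) - q (u 0)) - w (u 0) \<bullet> Dp uL (u 0) - w (u N) \<bullet> Dm (u N) uR"
    using \<open>N \<ge> 1\<close> by (simp add: node volume sum_subtractf sum_negf)
  also have "w (u 0) \<bullet> Dp uL (u 0) = q (u 0) - q uL - w uL \<bullet> Dm uL (u 0)"
    using C4[OF uL u[of 0]] by simp
  finally show ?thesis by simp
qed

lemma has_real_derivative_weighted_entropy:
  fixes U :: "nat \<Rightarrow> real \<Rightarrow> 'a::real_inner"
  assumes "\<And>i. i \<in> I \<Longrightarrow> (S has_derivative (\<lambda>v. w (U i t) \<bullet> v)) (at (U i t))"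
    and "\<And>i. i \<in> I \<Longrightarrow> (U i has_vector_derivative U' i) (at t)"
  shows "((\<lambda>t. \<Sum>i\<in>I. c i * S (U i t)) has_real_derivative (\<Sum>i\<in>I. c i * (w (U i t) \<bullet> U' i))) (at t)"
proof (intro DERIV_sum DERIV_cmult)
  fix i assume "i \<in> I"
  have "((\<lambda>t. S (U i t)) has_derivative (\<lambda>x. w (U i t) \<bullet> (x *\<^sub>R U' i))) (at t)"
    using assms(2)[OF \<open>i \<in> I\<close>] assms(1)[OF \<open>i \<in> I\<close>] unfolding has_vector_derivative_def
    by (rule has_derivative_compose)
  moreover have "(\<lambda>x. w (U i t) \<bullet> (x *\<^sub>R U' i)) = (*) (w (U i t) \<bullet> U' i)"
    by (auto simp: mult.commute)
  ultimately show "((\<lambda>t. S (U i t)) has_real_derivative w (U i t) \<bullet> U' i) (at t)"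
    by (simp add: has_field_derivative_def)
qed

lemma flux_differencing_entropy_rate:
  fixes Dm Dp :: "'a::real_inner \<Rightarrow> 'a \<Rightarrow> 'a" and w :: "'a \<Rightarrow> 'a" and q S :: "'a \<Rightarrow> real"
    and u u' :: "nat \<Rightarrow> real \<Rightarrow> 'a" and uL uR :: "real \<Rightarrow> 'a"
  assumes "N \<ge> 1" and sbp: "summation_by_parts N \<omega> D"
    and rows: "\<And>i. i \<le> N \<Longrightarrow> (\<Sum>m\<le>N. D i m) = 0"
    and C1: "\<And>a. a \<in> U \<Longrightarrow> Dm a a = 0"
    and C3: "\<And>a b. a \<in> U \<Longrightarrow> b \<in> U \<Longrightarrow> Dm a b + Dp b a = 0"
    and C4: "\<And>a b. a \<in> U \<Longrightarrow> b \<in> U \<Longrightarrow> w a \<bullet> Dm a b + w b \<bullet> Dp a b = q b - q a"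
    and S: "\<And>a. a \<in> U \<Longrightarrow> (S has_derivative (\<lambda>v. w a \<bullet> v)) (at a)"
    and u: "\<And>i. i \<le> N \<Longrightarrow> u i t \<in> U \<and> (u i has_vector_derivative u' i t) (at t)"
    and uL: "uL t \<in> U"
    and scheme: "\<And>i. i \<le> N \<Longrightarrow>
      (\<omega> i * J) *\<^sub>R u' i t + \<omega> i *\<^sub>R (\<Sum>m\<le>N. (2 * D i m) *\<^sub>R Dm (u i t) (u m t))
      + (if i = 0 then Dp (uL t) (u 0 t) else 0) + (if i = N then Dm (u N t) (uR t) else 0) = 0"
  shows "((\<lambda>t. \<Sum>i\<le>N. \<omega> i * J * S (u i t)) has_real_derivative
    (q (uL t) + w (uL t) \<bullet> Dm (uL t) (u 0 t)) - (q (u N t) + w (u N t) \<bullet> Dm (u N t) (uR t))) (at t)"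
proof -
  have "((\<lambda>t. \<Sum>i\<le>N. \<omega> i * J * S (u i t)) has_real_derivative
      (\<Sum>i\<le>N. \<omega> i * J * (w (u i t) \<bullet> u' i t))) (at t)"
    using S u by (intro has_real_derivative_weighted_entropy) auto
  moreover have "(\<Sum>i\<le>N. \<omega> i * J * (w (u i t) \<bullet> u' i t))
      = (q (uL t) + w (uL t) \<bullet> Dm (uL t) (u 0 t)) - (q (u N t) + w (u N t) \<bullet> Dm (u N t) (uR t))"
    using u by (intro flux_differencing_entropy_balance[OF \<open>N \<ge> 1\<close> sbp rows C1 C3 C4 _ uL scheme]) blast+
  ultimately show ?thesis by simp
qed

section \<open>Accuracy of the volume term\<close>

lemma smooth_on_UNIV_derivative_sequence:
  fixes g :: "real \<Rightarrow> 'b::real_normed_vector"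
  assumes "smooth_on UNIV g"
  obtains G where "G 0 = g" "\<And>k t. (G k has_vector_derivative G (Suc k) t) (at t)"
proof -
  obtain F :: "real list \<Rightarrow> real \<Rightarrow> 'b" where F: "\<And>x. F [] x = g x"
    "\<And>vs x. (F vs has_derivative (\<lambda>v. F (v # vs) x)) (at x)"
    using assms unfolding smooth_on_def by blast
  have deriv: "(F (replicate k 1) has_vector_derivative F (replicate (Suc k) 1) t) (at t)" for k t
  proof -
    have "linear (\<lambda>v. F (v # replicate k 1) t)"
      using F(2) has_derivative_linear by blast
    then have "F (v # replicate k 1) t = v *\<^sub>R F (1 # replicate k 1) t" for v
      using linear_scale[of "\<lambda>v. F (v # replicate k 1) t" v 1] by simp
    then have "(\<lambda>v. F (v # replicate k 1) t) = (\<lambda>v. v *\<^sub>R F (1 # replicate k 1) t)"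
      by (intro ext)
    then show ?thesis using F(2)[of "replicate k 1" t] by (simp add: has_vector_derivative_def)
  qed
  show ?thesis by (rule that[of "\<lambda>k. F (replicate k 1)"]) (use F(1) deriv in auto)
qed

lemma smooth_on_UNIV_if_derivative_sequence:
  fixes G :: "nat \<Rightarrow> real \<Rightarrow> real"
  assumes G: "\<And>k t. (G k has_real_derivative G (Suc k) t) (at t)"
  shows "smooth_on UNIV (G 0)"
proof -
  define F where "F vs x = prod_list vs * G (length vs) x" for vs x
  have "(F vs has_derivative (\<lambda>v. F (v # vs) x)) (at x)" for vs x
  proof -
    have "(F vs has_real_derivative prod_list vs * G (Suc (length vs)) x) (at x)"
      unfolding F_def by (intro DERIV_cmult G)
    moreover have "(\<lambda>v. F (v # vs) x) = (*) (prod_list vs * G (Suc (length vs)) x)"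
      by (auto simp: F_def)
    ultimately show ?thesis by (simp add: has_field_derivative_def)
  qed
  moreover have "continuous_on UNIV (F vs)" for vs
    unfolding F_def by (intro continuous_at_imp_continuous_on ballI continuous_intros DERIV_isCont[OF G])
  moreover have "F [] x = G 0 x" for x by (simp add: F_def)
  ultimately show ?thesis unfolding smooth_on_def by blast
qed

lemma smooth_on_power: "smooth_on UNIV (\<lambda>x::real. x ^ j)"
proof -
  define G where "G k x = (\<Prod>i<k. real (j - i)) * x ^ (j - k)" for k and x :: real
  have "(G k has_real_derivative G (Suc k) t) (at t)" for k t
  proof -
    have "(G k has_real_derivative (\<Prod>i<k. real (j - i)) * (real (j - k) * t ^ (j - k - Suc 0))) (at t)"
      unfolding G_def by (intro DERIV_cmult DERIV_pow)
    moreover have "j - k - Suc 0 = j - Suc k" by simp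
    ultimately show ?thesis by (simp add: G_def mult.assoc)
  qed
  then have "smooth_on UNIV (G 0)" by (rule smooth_on_UNIV_if_derivative_sequence)
  moreover have "G 0 = (\<lambda>x. x ^ j)" by (auto simp: G_def)
  ultimately show ?thesis by simp
qed

lemma bigo_at_right_power_coeff_zero:
  fixes K :: real
  assumes "(\<lambda>h. K * h ^ a) \<in> O[at_right 0](\<lambda>h. h ^ p)" "a < p"
  shows "K = 0"
proof -
  obtain c where "eventually (\<lambda>h. norm (K * h ^ a) \<le> c * norm (h ^ p)) (at_right (0::real))"
    using landau_o.bigE[OF assms(1)] by blast
  moreover have "eventually (\<lambda>h. h > 0) (at_right (0::real))" by (simp add: eventually_at_right_less)
  ultimately have "eventually (\<lambda>h. \<bar>K\<bar> \<le> c * h ^ (p - a)) (at_right (0::real))"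
  proof eventually_elim
    case (elim h)
    have "h ^ a * \<bar>K\<bar> \<le> h ^ a * (c * h ^ (p - a))"
      using elim assms(2) by (simp add: abs_mult power_add[symmetric] mult_ac)
    then show ?case using elim(2) by (simp add: mult_le_cancel_left_pos)
  qed
  moreover have "((\<lambda>h. c * h ^ (p - a)) \<longlongrightarrow> 0) (at_right (0::real))"
    using assms(2) by (intro tendsto_eq_intros) auto
  ultimately have "\<bar>K\<bar> \<le> 0"
    using tendsto_le[OF trivial_limit_at_right_real _ tendsto_const] by blast
  then show ?thesis by simp
qed

lemma stencil_exact_on_monomials:
  fixes d x :: "nat \<Rightarrow> real"
  assumes accurate: "\<And>g c. smooth_on UNIV g \<Longrightarrow>
      (\<lambda>h. (1 / h) * (\<Sum>m\<le>N. d m * g (c + h * x m)) - deriv g (c + h * y)) \<in> O[at_right 0](\<lambda>h. h ^ p)"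
    and "j \<le> p"
  shows "(\<Sum>m\<le>N. d m * x m ^ j) = real j * y ^ (j - 1)"
proof -
  define K where "K = (\<Sum>m\<le>N. d m * x m ^ j) - real j * y ^ (j - 1)"
  let ?err = "\<lambda>h. (1 / h) * (\<Sum>m\<le>N. d m * (0 + h * x m) ^ j) - deriv (\<lambda>z. z ^ j) (0 + h * y)"
  have "(\<lambda>h. h * ?err h) \<in> O[at_right 0](\<lambda>h. h * h ^ p)"
    using accurate[OF smooth_on_power] by (rule landau_o.big.mult_left)
  moreover have "eventually (\<lambda>h. h * ?err h = K * h ^ j) (at_right 0)"
  proof (rule eventually_at_rightI[of 0 1])
    fix h :: real assume "h \<in> {0<..<1}"
    then show "h * ?err h = K * h ^ j"
      using DERIV_imp_deriv[OF DERIV_pow[of j "h * y"]]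
      by (cases j) (simp_all add: K_def sum_distrib_left power_mult_distrib algebra_simps)
  qed simp
  ultimately have "(\<lambda>h. K * h ^ j) \<in> O[at_right 0](\<lambda>h. h ^ Suc p)"
    by (simp add: landau_o.big.in_cong)
  then have "K = 0" by (rule bigo_at_right_power_coeff_zero) (use \<open>j \<le> p\<close> in simp)
  then show ?thesis by (simp add: K_def)
qed

lemma has_vector_derivative_sum_list:
  assumes "\<And>x. x \<in> set xs \<Longrightarrow> ((\<lambda>t. f x t) has_vector_derivative f' x) (at t)"
  shows "((\<lambda>t. sum_list (map (\<lambda>x. f x t) xs)) has_vector_derivative sum_list (map f' xs)) (at t)"
  using assms by (induction xs) (auto intro: has_vector_derivative_add)

lemma continuous_on_sum_list:
  assumes "\<And>x. x \<in> set xs \<Longrightarrow> continuous_on S (\<lambda>z. f x z)"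
  shows "continuous_on S (\<lambda>z. sum_list (map (\<lambda>x. f x z) xs) :: 'b::real_normed_vector)"
  using assms by (induction xs) (auto intro: continuous_on_add)

lemma has_real_derivative_inner_const:
  assumes "(f has_vector_derivative f') (at t)"
  shows "((\<lambda>t. f t \<bullet> e) has_real_derivative f' \<bullet> e) (at t)"
proof -
  have "((\<lambda>t. f t \<bullet> e) has_derivative (\<lambda>x. (x *\<^sub>R f') \<bullet> e)) (at t)"
    using assms unfolding has_vector_derivative_def by (rule has_derivative_inner_left)
  moreover have "(\<lambda>x. (x *\<^sub>R f') \<bullet> e) = (*) (f' \<bullet> e)" by (auto simp: mult.commute)
  ultimately show ?thesis unfolding has_field_derivative_def by simp
qed

locale derivative_tower =
  fixes A :: "'a::euclidean_space set" and F :: "'a list \<Rightarrow> 'a \<Rightarrow> 'b::real_normed_vector"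
  assumes open_domain: "open A"
    and has_derivative_tower: "\<And>vs x. x \<in> A \<Longrightarrow> (F vs has_derivative (\<lambda>v. F (v # vs) x)) (at x)"
    and continuous_on_tower: "\<And>vs. continuous_on A (F vs)"
begin

lemma derivative_unique_on_domain:
  assumes "x \<in> A" "\<And>y. y \<in> A \<Longrightarrow> f y = g y"
    and "(f has_derivative f') (at x)" "(g has_derivative g') (at x)"
  shows "f' = g'"
proof -
  have "(g has_derivative f') (at x)"
    by (rule has_derivative_transform_within_open[OF assms(3) open_domain assms(1)]) (simp add: assms(2))
  then show ?thesis using has_derivative_unique assms(4) by blast
qed

lemma linear_in_slot: "x \<in> A \<Longrightarrow> linear (\<lambda>v. F (pre @ v # post) x)"
proof (induction pre arbitrary: x)
  case Nil
  then show ?case using has_derivative_linear[OF has_derivative_tower[OF Nil, of post]] by simp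
next
  case (Cons u pre)
  note tower = has_derivative_tower[OF Cons.prems]
  show ?case
  proof (rule linearI)
    fix v1 v2
    have "F (pre @ (v1 + v2) # post) y = F (pre @ v1 # post) y + F (pre @ v2 # post) y" if "y \<in> A" for y
      using linear_add[OF Cons.IH[OF that]] by simp
    then have "(\<lambda>w. F (w # pre @ (v1 + v2) # post) x) = (\<lambda>w. F (w # pre @ v1 # post) x + F (w # pre @ v2 # post) x)"
      by (rule derivative_unique_on_domain[OF Cons.prems _ tower has_derivative_add[OF tower tower]])
    then show "F ((u # pre) @ (v1 + v2) # post) x = F ((u # pre) @ v1 # post) x + F ((u # pre) @ v2 # post) x"
      by (simp add: fun_eq_iff)
  next
    fix r v
    have "F (pre @ (r *\<^sub>R v) # post) y = r *\<^sub>R F (pre @ v # post) y" if "y \<in> A" for y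
      using linear_scale[OF Cons.IH[OF that]] by simp
    then have "(\<lambda>w. F (w # pre @ (r *\<^sub>R v) # post) x) = (\<lambda>w. r *\<^sub>R F (w # pre @ v # post) x)"
      by (rule derivative_unique_on_domain[OF Cons.prems _ tower has_derivative_scaleR_right[OF tower]])
    then show "F ((u # pre) @ (r *\<^sub>R v) # post) x = r *\<^sub>R F ((u # pre) @ v # post) x"
      by (simp add: fun_eq_iff)
  qed
qed

lemma slot_basis_expansion:
  assumes "x \<in> A"
  shows "F (pre @ v # post) x = (\<Sum>e\<in>Basis. (v \<bullet> e) *\<^sub>R F (pre @ e # post) x)"
proof -
  note linear = linear_in_slot[OF assms, of pre post]
  have "F (pre @ v # post) x = F (pre @ (\<Sum>e\<in>Basis. (v \<bullet> e) *\<^sub>R e) # post) x"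
    by (simp add: euclidean_representation)
  also have "\<dots> = (\<Sum>e\<in>Basis. (v \<bullet> e) *\<^sub>R F (pre @ e # post) x)"
    using linear_sum[OF linear, of "\<lambda>e. (v \<bullet> e) *\<^sub>R e" Basis] linear_scale[OF linear] by simp
  finally show ?thesis .
qed

lemma continuous_on_tower_along:
  fixes S :: "'p::topological_space set" and bs :: "('p \<Rightarrow> 'a) list" and y :: "'p \<Rightarrow> 'a"
  assumes "\<And>b. b \<in> set bs \<Longrightarrow> continuous_on S b" and "continuous_on S y" "y ` S \<subseteq> A"
  shows "continuous_on S (\<lambda>z. F (pre @ map (\<lambda>b. b z) bs) (y z))"
  using assms(1)
proof (induction bs arbitrary: pre)
  case Nil
  then show ?case using continuous_on_compose2[OF continuous_on_tower assms(2,3)] by simp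
next
  case (Cons b bs)
  have "continuous_on S (\<lambda>z. \<Sum>e\<in>Basis. (b z \<bullet> e) *\<^sub>R F ((pre @ [e]) @ map (\<lambda>b. b z) bs) (y z))"
    using Cons.prems by (intro continuous_intros Cons.IH) auto
  moreover have "F (pre @ map (\<lambda>b. b z) (b # bs)) (y z)
      = (\<Sum>e\<in>Basis. (b z \<bullet> e) *\<^sub>R F ((pre @ [e]) @ map (\<lambda>b. b z) bs) (y z))" if "z \<in> S" for z
    using slot_basis_expansion[of "y z" pre "b z"] assms(3) that by auto
  ultimately show ?case using continuous_on_cong by force
qed

lemma has_vector_derivative_tower_along:
  fixes V :: "nat \<Rightarrow> real \<Rightarrow> 'a" and y :: "real \<Rightarrow> 'a"
  assumes V: "\<And>k t. (V k has_vector_derivative V (Suc k) t) (at t)"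
    and y: "\<And>t. (y has_vector_derivative V 1 t) (at t)" "\<And>t. y t \<in> A"
  shows "((\<lambda>t. F (pre @ map (\<lambda>k. V k t) ks) (y t)) has_vector_derivative
     (F (V 1 t # pre @ map (\<lambda>k. V k t) ks) (y t)
      + (\<Sum>i<length ks. F (pre @ map (\<lambda>k. V k t) (ks[i := Suc (ks ! i)])) (y t)))) (at t)"
proof (induction ks arbitrary: pre)
  case Nil
  have "((\<lambda>t. F pre (y t)) has_derivative (\<lambda>x. F ((x *\<^sub>R V 1 t) # pre) (y t))) (at t)"
    using y(1)[unfolded has_vector_derivative_def] has_derivative_tower[OF y(2)]
    by (rule has_derivative_compose)
  moreover have "F ((x *\<^sub>R V 1 t) # pre) (y t) = x *\<^sub>R F (V 1 t # pre) (y t)" for x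
    using linear_scale[OF linear_in_slot[OF y(2), of "[]" pre]] by simp
  ultimately show ?case by (simp add: has_vector_derivative_def)
next
  case (Cons k ks)
  define rest where "rest t = map (\<lambda>k. V k t) ks" for t
  define G where "G e t = F ((pre @ [e]) @ rest t) (y t)" for e t
  define DG where "DG e = F (V 1 t # (pre @ [e]) @ rest t) (y t)
      + (\<Sum>i<length ks. F ((pre @ [e]) @ map (\<lambda>k. V k t) (ks[i := Suc (ks ! i)])) (y t))" for e
  have expand: "F (pre @ map (\<lambda>k. V k t) (k # ks)) (y t) = (\<Sum>e\<in>Basis. (V k t \<bullet> e) *\<^sub>R G e t)" for t
    using slot_basis_expansion[OF y(2), of pre "V k t" "rest t"] by (simp add: G_def rest_def)
  have "((\<lambda>t. \<Sum>e\<in>Basis. (V k t \<bullet> e) *\<^sub>R G e t) has_vector_derivative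
      (\<Sum>e\<in>Basis. (V k t \<bullet> e) *\<^sub>R DG e + (V (Suc k) t \<bullet> e) *\<^sub>R G e t)) (at t)"
    using Cons.IH[of "pre @ [e]" for e] unfolding G_def DG_def rest_def
    by (intro has_vector_derivative_sum has_vector_derivative_scaleR has_real_derivative_inner_const V)
  moreover have "(\<Sum>e\<in>Basis. (V k t \<bullet> e) *\<^sub>R DG e + (V (Suc k) t \<bullet> e) *\<^sub>R G e t)
     = F (V 1 t # pre @ map (\<lambda>k. V k t) (k # ks)) (y t)
      + (\<Sum>i<length (k # ks). F (pre @ map (\<lambda>k. V k t) ((k # ks)[i := Suc ((k # ks) ! i)])) (y t))"
  proof -
    have "(\<Sum>e\<in>Basis. (V k t \<bullet> e) *\<^sub>R (\<Sum>i<length ks. F (pre @ e # map (\<lambda>k. V k t) (ks[i := Suc (ks ! i)])) (y t)))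
        = (\<Sum>i<length ks. \<Sum>e\<in>Basis. (V k t \<bullet> e) *\<^sub>R F (pre @ e # map (\<lambda>k. V k t) (ks[i := Suc (ks ! i)])) (y t))"
      by (simp add: scaleR_sum_right sum.swap[of _ Basis])
    also have "\<dots> = (\<Sum>i<length ks. F (pre @ V k t # map (\<lambda>k. V k t) (ks[i := Suc (ks ! i)])) (y t))"
      by (intro sum.cong refl) (rule slot_basis_expansion[OF y(2), symmetric])
    finally show ?thesis
      unfolding DG_def G_def sum.distrib scaleR_add_right length_Cons sum.lessThan_Suc_shift
      using slot_basis_expansion[OF y(2), of "V 1 t # pre" "V k t" "rest t"]
        slot_basis_expansion[OF y(2), of pre "V (Suc k) t" "rest t"]
      by (simp add: rest_def)
  qed
  ultimately show ?case unfolding expand by simp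
qed

end

text \<open>A list \<open>ks\<close> stands for the term \<open>F (map (\<lambda>k. V k t) ks) (y t)\<close>, a derivative of \<open>F []\<close> at
  \<open>y t\<close> applied to derivatives of the curve. Differentiating in \<open>t\<close> either adds the direction
  \<open>y' = V 1\<close> in front or raises the order of one of the directions (Faa di Bruno's formula).\<close>

fun faa_di_bruno_terms :: "nat \<Rightarrow> nat list list" where
  "faa_di_bruno_terms 0 = [[]]"
| "faa_di_bruno_terms (Suc j) = concat (map (\<lambda>ks. (1 # ks) # map (\<lambda>i. ks[i := Suc (ks ! i)]) [0..<length ks])
     (faa_di_bruno_terms j))"

lemma sum_list_map_concat: "sum_list (map f (concat xss)) = sum_list (map (\<lambda>xs. sum_list (map f xs)) xss)"
  by (induction xss) simp_all

context derivative_tower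
begin

definition faa_di_bruno_sum :: "nat \<Rightarrow> (nat \<Rightarrow> real \<Rightarrow> 'a) \<Rightarrow> (real \<Rightarrow> 'a) \<Rightarrow> real \<Rightarrow> 'b" where
  "faa_di_bruno_sum j V y t = sum_list (map (\<lambda>ks. F (map (\<lambda>k. V k t) ks) (y t)) (faa_di_bruno_terms j))"

lemma has_vector_derivative_faa_di_bruno_sum:
  fixes V :: "nat \<Rightarrow> real \<Rightarrow> 'a" and y :: "real \<Rightarrow> 'a"
  assumes "\<And>k t. (V k has_vector_derivative V (Suc k) t) (at t)"
    and "\<And>t. (y has_vector_derivative V 1 t) (at t)" "\<And>t. y t \<in> A"
  shows "(faa_di_bruno_sum j V y has_vector_derivative faa_di_bruno_sum (Suc j) V y t) (at t)"
proof -
  have "((\<lambda>t. faa_di_bruno_sum j V y t) has_vector_derivative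
      sum_list (map (\<lambda>ks. F (V 1 t # [] @ map (\<lambda>k. V k t) ks) (y t)
        + (\<Sum>i<length ks. F ([] @ map (\<lambda>k. V k t) (ks[i := Suc (ks ! i)])) (y t))) (faa_di_bruno_terms j))) (at t)"
    unfolding faa_di_bruno_sum_def
    by (rule has_vector_derivative_sum_list) (use has_vector_derivative_tower_along[OF assms, of "[]"] in simp)
  moreover have "faa_di_bruno_sum (Suc j) V y t = sum_list (map (\<lambda>ks. F (V 1 t # [] @ map (\<lambda>k. V k t) ks) (y t)
      + (\<Sum>i<length ks. F ([] @ map (\<lambda>k. V k t) (ks[i := Suc (ks ! i)])) (y t))) (faa_di_bruno_terms j))"
    by (simp add: faa_di_bruno_sum_def sum_list_map_concat interv_sum_list_conv_sum_set_nat
        atLeast0LessThan o_def)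
  ultimately show ?thesis by simp
qed

lemma continuous_on_faa_di_bruno_sum:
  fixes S :: "'p::topological_space set" and V :: "nat \<Rightarrow> real \<Rightarrow> 'a" and Y :: "'p \<Rightarrow> 'a"
    and T :: "'p \<Rightarrow> real"
  assumes V: "\<And>k. continuous_on UNIV (V k)" and "continuous_on S T"
    and "continuous_on S Y" "Y ` S \<subseteq> A"
  shows "continuous_on S (\<lambda>z. sum_list (map (\<lambda>ks. F (map (\<lambda>k. V k (T z)) ks) (Y z)) (faa_di_bruno_terms j)))"
proof (rule continuous_on_sum_list)
  fix ks
  have "continuous_on S (\<lambda>z. F ([] @ map (\<lambda>b. b z) (map (\<lambda>k z. V k (T z)) ks)) (Y z))"
    using continuous_on_compose2[OF V assms(2)]
    by (intro continuous_on_tower_along assms(3,4)) auto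
  then show "continuous_on S (\<lambda>z. F (map (\<lambda>k. V k (T z)) ks) (Y z))" by (simp add: o_def)
qed

end

lemma derivative_snd_of_pair_tower:
  fixes F :: "('a::real_normed_vector \<times> 'a) list \<Rightarrow> 'a \<times> 'a \<Rightarrow> 'b::real_normed_vector"
  assumes "open U" "\<And>z. z \<in> U \<times> U \<Longrightarrow> F [] z = (\<lambda>(a, b). Dm a b) z"
    and "a \<in> U" "b \<in> U" "(F [] has_derivative (\<lambda>v. F [v] (a, b))) (at (a, b))"
    and "((\<lambda>b. Dm a b) has_derivative D) (at b)"
  shows "F [(0, v)] (a, b) = D v"
proof -
  have "((\<lambda>b. (a, b)) has_derivative (\<lambda>v. (0, v))) (at b)"
    by (intro has_derivative_Pair has_derivative_const has_derivative_ident)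
  from has_derivative_compose[OF this assms(5)]
  have "((\<lambda>b. F [] (a, b)) has_derivative (\<lambda>v. F [(0, v)] (a, b))) (at b)" by simp
  then have "((\<lambda>b. Dm a b) has_derivative (\<lambda>v. F [(0, v)] (a, b))) (at b)"
    by (rule has_derivative_transform_within_open[OF _ \<open>open U\<close> \<open>b \<in> U\<close>]) (use assms(2,3) in force)
  then show ?thesis using has_derivative_unique assms(6) by metis
qed

lemma smooth_composition_partials:
  fixes Dm :: "'a::euclidean_space \<Rightarrow> 'a \<Rightarrow> 'b::real_normed_vector" and u :: "real \<Rightarrow> 'a"
  assumes "open U" and Dm: "smooth_on (U \<times> U) (\<lambda>(a, b). Dm a b)"
    and u: "smooth_on UNIV u" "range u \<subseteq> U"
  obtains L :: "nat \<Rightarrow> real \<Rightarrow> real \<Rightarrow> 'b" where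
    "\<And>s t. L 0 s t = Dm (u s) (u t)"
    "\<And>j s t. (L j s has_vector_derivative L (Suc j) s t) (at t)"
    "\<And>j. continuous_on UNIV (\<lambda>z. L j (fst z) (snd z))"
    "\<And>s t D. ((\<lambda>b. Dm (u s) b) has_derivative D) (at (u t)) \<Longrightarrow> L 1 s t = D (vector_derivative u (at t))"
proof -
  obtain F :: "('a \<times> 'a) list \<Rightarrow> 'a \<times> 'a \<Rightarrow> 'b" where
    F0: "\<And>z. z \<in> U \<times> U \<Longrightarrow> F [] z = (\<lambda>(a, b). Dm a b) z" and
    tower: "\<And>vs z. z \<in> U \<times> U \<Longrightarrow> (F vs has_derivative (\<lambda>v. F (v # vs) z)) (at z)" and
    "\<And>vs. continuous_on (U \<times> U) (F vs)"
    using Dm unfolding smooth_on_def by blast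
  then interpret derivative_tower "U \<times> U" F
    using \<open>open U\<close> by unfold_locales (auto intro: open_Times)
  obtain Us where Us0: "Us 0 = u" and Us: "\<And>k t. (Us k has_vector_derivative Us (Suc k) t) (at t)"
    using smooth_on_UNIV_derivative_sequence[OF u(1)] by blast
  define V where "V k t = (0 :: 'a, Us k t)" for k t
  define Y where "Y s t = (u s, u t)" for s t
  have V: "(V k has_vector_derivative V (Suc k) t) (at t)" for k t
    unfolding V_def by (intro has_vector_derivative_Pair has_vector_derivative_const Us)
  have u': "(u has_vector_derivative Us 1 t) (at t)" for t using Us[of 0 t] Us0 by simp
  have Y: "(Y s has_vector_derivative V 1 t) (at t)" "Y s t \<in> U \<times> U" for s t
    unfolding Y_def V_def by (intro has_vector_derivative_Pair has_vector_derivative_const u') (use u(2) in auto)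
  have continuous_u: "continuous_on UNIV u"
    using u' by (intro continuous_at_imp_continuous_on ballI) (blast intro: has_vector_derivative_continuous)
  show ?thesis
  proof (rule that[of "\<lambda>j s. faa_di_bruno_sum j V (Y s)"])
    show "faa_di_bruno_sum 0 V (Y s) t = Dm (u s) (u t)" for s t
      using F0[OF Y(2)] by (simp add: faa_di_bruno_sum_def Y_def)
    show "(faa_di_bruno_sum j V (Y s) has_vector_derivative faa_di_bruno_sum (Suc j) V (Y s) t) (at t)"
      for j s t by (rule has_vector_derivative_faa_di_bruno_sum[OF V Y])
    show "continuous_on UNIV (\<lambda>z. faa_di_bruno_sum j V (Y (fst z)) (snd z))" for j
    proof -
      have "continuous_on UNIV (V k)" for k
        using V by (intro continuous_at_imp_continuous_on ballI) (blast intro: has_vector_derivative_continuous)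
      then have "continuous_on UNIV (\<lambda>z. sum_list (map (\<lambda>ks. F (map (\<lambda>k. V k (snd z)) ks)
          ((\<lambda>z. (u (fst z), u (snd z))) z)) (faa_di_bruno_terms j)))"
        using u(2) by (intro continuous_on_faa_di_bruno_sum continuous_intros
            continuous_on_compose2[OF continuous_u]) auto
      then show ?thesis by (simp add: faa_di_bruno_sum_def Y_def)
    qed
    show "faa_di_bruno_sum 1 V (Y s) t = D (vector_derivative u (at t))"
      if "((\<lambda>b. Dm (u s) b) has_derivative D) (at (u t))" for s t D
    proof -
      have "F [(0, Us 1 t)] (u s, u t) = D (Us 1 t)"
        using \<open>open U\<close> F0 u(2) has_derivative_tower[OF Y(2)[of s t, unfolded Y_def]] that
        by (intro derivative_snd_of_pair_tower[where F = F and Dm = Dm and U = U]) auto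
      then show ?thesis using vector_derivative_at[OF u'] by (simp add: faa_di_bruno_sum_def V_def Y_def)
    qed
  qed
qed

lemma taylor_remainder_bound:
  fixes f :: "nat \<Rightarrow> real \<Rightarrow> real"
  assumes f: "\<And>m t. m < n \<Longrightarrow> t \<in> {a..b} \<Longrightarrow> (f m has_real_derivative f (Suc m) t) (at t)"
    and "a \<le> c" "c \<le> b" "a \<le> x" "x \<le> b" and B: "\<And>t. t \<in> {a..b} \<Longrightarrow> \<bar>f n t\<bar> \<le> B"
  shows "\<bar>f 0 x - (\<Sum>m<n. f m c / fact m * (x - c) ^ m)\<bar> \<le> B * \<bar>x - c\<bar> ^ n / fact n"
proof (cases "n = 0")
  case True
  then show ?thesis using B[of x] assms(4,5) by simp
next
  case False
  show ?thesis
  proof (cases "x = c")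
    case True
    have "B \<ge> 0" using B[of c] assms(2,3) by (meson abs_ge_zero atLeastAtMost_iff order_trans)
    moreover obtain n' where "n = Suc n'" using \<open>n \<noteq> 0\<close> by (cases n) auto
    ultimately show ?thesis using True by (simp add: sum.lessThan_Suc_shift)
  next
    case False
    obtain t where t: "if x < c then x < t \<and> t < c else c < t \<and> t < x"
      "f 0 x = (\<Sum>m<n. f m c / fact m * (x - c) ^ m) + f n t / fact n * (x - c) ^ n"
      using Taylor[of n f "f 0" a b c x] \<open>n \<noteq> 0\<close> f False assms(2-5) by auto
    have "t \<in> {a..b}" using t(1) assms(2-5) by (auto split: if_splits)
    then show ?thesis
      using t(2) B by (simp add: abs_mult power_abs divide_right_mono mult_right_mono)
  qed
qed

lemma taylor_remainder_bound_cart: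
  fixes f :: "nat \<Rightarrow> real \<Rightarrow> real^'n"
  assumes f: "\<And>m t. m < n \<Longrightarrow> (f m has_vector_derivative f (Suc m) t) (at t)"
    and "a \<le> c" "c \<le> b" "a \<le> x" "x \<le> b" and B: "\<And>t. t \<in> {a..b} \<Longrightarrow> norm (f n t) \<le> B"
  shows "norm (f 0 x - (\<Sum>m<n. ((x - c) ^ m / fact m) *\<^sub>R f m c)) \<le> real CARD('n) * B * \<bar>x - c\<bar> ^ n / fact n"
proof -
  have component: "\<bar>(f 0 x - (\<Sum>m<n. ((x - c) ^ m / fact m) *\<^sub>R f m c)) $ j\<bar> \<le> B * \<bar>x - c\<bar> ^ n / fact n" for j
  proof -
    have "((\<lambda>t. f m t $ j) has_real_derivative f (Suc m) t $ j) (at t)" if "m < n" for m t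
      using has_real_derivative_inner_const[OF f[OF that], of "axis j 1"] by (simp add: cart_eq_inner_axis)
    then have "\<bar>f 0 x $ j - (\<Sum>m<n. f m c $ j / fact m * (x - c) ^ m)\<bar> \<le> B * \<bar>x - c\<bar> ^ n / fact n"
      using assms(2-5) order_trans[OF component_le_norm_cart B]
      by (intro taylor_remainder_bound[where f = "\<lambda>m t. f m t $ j"]) simp_all
    then show ?thesis by (simp add: sum_component algebra_simps)
  qed
  have "norm (f 0 x - (\<Sum>m<n. ((x - c) ^ m / fact m) *\<^sub>R f m c))
      \<le> (\<Sum>j\<in>UNIV. \<bar>(f 0 x - (\<Sum>m<n. ((x - c) ^ m / fact m) *\<^sub>R f m c)) $ j\<bar>)"
    by (rule norm_le_l1_cart)
  also have "\<dots> \<le> (\<Sum>j\<in>(UNIV::'n set). B * \<bar>x - c\<bar> ^ n / fact n)" by (intro sum_mono component)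
  finally show ?thesis by simp
qed

lemma stencil_on_taylor_polynomial:
  fixes a :: "nat \<Rightarrow> 'v::real_vector" and d x :: "nat \<Rightarrow> real"
  assumes exact: "\<And>j. j \<le> p \<Longrightarrow> (\<Sum>m\<le>N. d m * x m ^ j) = real j * x i ^ (j - 1)" and "h \<noteq> 0"
  shows "(1 / h) *\<^sub>R (\<Sum>m\<le>N. d m *\<^sub>R (\<Sum>j<Suc p. ((h * x m) ^ j / fact j) *\<^sub>R a j))
    = (\<Sum>j<p. ((h * x i) ^ j / fact j) *\<^sub>R a (Suc j))"
proof -
  have "(\<Sum>m\<le>N. d m *\<^sub>R (\<Sum>j<Suc p. ((h * x m) ^ j / fact j) *\<^sub>R a j))
      = (\<Sum>j<Suc p. \<Sum>m\<le>N. (d m * ((h * x m) ^ j / fact j)) *\<^sub>R a j)"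
    unfolding scaleR_sum_right scaleR_scaleR by (rule sum.swap)
  also have "\<dots> = (\<Sum>j<Suc p. \<Sum>m\<le>N. (h ^ j / fact j * (d m * x m ^ j)) *\<^sub>R a j)"
    by (intro sum.cong refl) (simp add: power_mult_distrib mult_ac)
  also have "\<dots> = (\<Sum>j<Suc p. (h ^ j / fact j * (\<Sum>m\<le>N. d m * x m ^ j)) *\<^sub>R a j)"
    by (simp add: scaleR_sum_left sum_distrib_left)
  also have "\<dots> = (\<Sum>j<Suc p. (h ^ j / fact j * (real j * x i ^ (j - 1))) *\<^sub>R a j)"
    by (intro sum.cong refl) (simp add: exact less_Suc_eq_le)
  also have "\<dots> = (\<Sum>j<p. (h ^ Suc j / fact (Suc j) * (real (Suc j) * x i ^ j)) *\<^sub>R a (Suc j))"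
    unfolding sum.lessThan_Suc_shift by simp
  also have "\<dots> = h *\<^sub>R (\<Sum>j<p. ((h * x i) ^ j / fact j) *\<^sub>R a (Suc j))"
    by (simp add: scaleR_sum_right power_mult_distrib fact_Suc)
  finally show ?thesis using \<open>h \<noteq> 0\<close> by simp
qed

lemma taylor_remainder_bound_cart_scaled:
  fixes f :: "nat \<Rightarrow> real \<Rightarrow> real^'n" and r M :: real
  assumes f: "\<And>m t. m < n \<Longrightarrow> (f m has_vector_derivative f (Suc m) t) (at t)"
    and z: "\<bar>z\<bar> \<le> r" and h: "0 < h" "h \<le> 1"
    and M: "\<And>t. t \<in> {c - r..c + r} \<Longrightarrow> norm (f n t) \<le> M"
  shows "norm (f 0 (c + h * z) - (\<Sum>j<n. ((h * z) ^ j / fact j) *\<^sub>R f j c))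
    \<le> real CARD('n) * M * (h * r) ^ n / fact n"
proof -
  have hz: "\<bar>h * z\<bar> \<le> h * r" using z h by (simp add: abs_mult)
  moreover have "h * r \<le> r" using z h by (intro mult_left_le_one_le) auto
  ultimately have x: "c + h * z \<in> {c - r..c + r}" and c: "c \<in> {c - r..c + r}"
    using z by (auto simp: abs_le_iff)
  then have "M \<ge> 0" using M by (meson norm_ge_zero order_trans)
  have "norm (f 0 (c + h * z) - (\<Sum>j<n. ((c + h * z - c) ^ j / fact j) *\<^sub>R f j c))
      \<le> real CARD('n) * M * \<bar>c + h * z - c\<bar> ^ n / fact n"
    using x c by (intro taylor_remainder_bound_cart[OF f _ _ _ _ M]) auto
  also have "\<dots> \<le> real CARD('n) * M * (h * r) ^ n / fact n"
    using hz \<open>M \<ge> 0\<close> by (intro divide_right_mono mult_left_mono power_mono) auto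
  finally show ?thesis by simp
qed

lemma stencil_taylor_estimate:
  fixes L :: "nat \<Rightarrow> real \<Rightarrow> real \<Rightarrow> real^'n" and d x :: "nat \<Rightarrow> real" and r M :: real
  assumes L: "\<And>j s t. (L j s has_vector_derivative L (Suc j) s t) (at t)"
    and exact: "\<And>j. j \<le> p \<Longrightarrow> (\<Sum>m\<le>N. d m * x m ^ j) = real j * x i ^ (j - 1)"
    and "i \<le> N" and r: "\<And>m. m \<le> N \<Longrightarrow> \<bar>x m\<bar> \<le> r"
    and M: "\<And>s t. s \<in> {c - r..c + r} \<Longrightarrow> t \<in> {c - r..c + r} \<Longrightarrow> norm (L (Suc p) s t) \<le> M"
    and h: "0 < h" "h \<le> 1"
  shows "norm ((1 / h) *\<^sub>R (\<Sum>m\<le>N. d m *\<^sub>R L 0 (c + h * x i) (c + h * x m)) - L 1 (c + h * x i) (c + h * x i))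
    \<le> ((\<Sum>m\<le>N. \<bar>d m\<bar>) * (real CARD('n) * M * r ^ Suc p / fact (Suc p)) + real CARD('n) * M * r ^ p / fact p) * h ^ p"
proof -
  define y where "y = c + h * x i"
  define T where "T m = (\<Sum>j<Suc p. ((h * x m) ^ j / fact j) *\<^sub>R L j y c)" for m
  define T' where "T' = (\<Sum>j<p. ((h * x i) ^ j / fact j) *\<^sub>R L (Suc j) y c)"
  have "\<bar>h * x i\<bar> \<le> r" using r[OF \<open>i \<le> N\<close>] h mult_left_le_one_le[of "\<bar>x i\<bar>" h] by (simp add: abs_mult)
  then have y: "y \<in> {c - r..c + r}" by (auto simp: y_def abs_le_iff)
  have "norm (\<Sum>m\<le>N. d m *\<^sub>R (L 0 y (c + h * x m) - T m))
      \<le> (\<Sum>m\<le>N. \<bar>d m\<bar> * (real CARD('n) * M * (h * r) ^ Suc p / fact (Suc p)))"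
    unfolding T_def using L r h M[OF y]
    by (intro order_trans[OF norm_sum sum_mono])
      (auto simp only: norm_scaleR atMost_iff intro!: mult_left_mono taylor_remainder_bound_cart_scaled)
  then have taylor0: "norm ((1 / h) *\<^sub>R (\<Sum>m\<le>N. d m *\<^sub>R (L 0 y (c + h * x m) - T m)))
      \<le> (1 / h) * (\<Sum>m\<le>N. \<bar>d m\<bar> * (real CARD('n) * M * (h * r) ^ Suc p / fact (Suc p)))"
    using h by (simp add: divide_right_mono)
  have taylor1: "norm (L (Suc 0) y y - T') \<le> real CARD('n) * M * (h * r) ^ p / fact p"
    unfolding T'_def y_def using L r[OF \<open>i \<le> N\<close>] h M[OF y[unfolded y_def]]
    by (intro taylor_remainder_bound_cart_scaled[where f = "\<lambda>j. L (Suc j) y", unfolded y_def]) auto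
  have "(1 / h) *\<^sub>R (\<Sum>m\<le>N. d m *\<^sub>R L 0 y (c + h * x m)) - L (Suc 0) y y
      = (1 / h) *\<^sub>R (\<Sum>m\<le>N. d m *\<^sub>R (L 0 y (c + h * x m) - T m)) - (L (Suc 0) y y - T')"
    using stencil_on_taylor_polynomial[OF exact, where h = h and a = "\<lambda>j. L j y c"] h
    by (simp add: T_def T'_def scaleR_diff_right sum_subtractf algebra_simps)
  also have "norm \<dots> \<le> (1 / h) * (\<Sum>m\<le>N. \<bar>d m\<bar> * (real CARD('n) * M * (h * r) ^ Suc p / fact (Suc p)))
      + real CARD('n) * M * (h * r) ^ p / fact p"
    using taylor0 taylor1 by (rule order_trans[OF norm_triangle_ineq4 add_mono])
  also have "\<dots> = ((\<Sum>m\<le>N. \<bar>d m\<bar>) * (real CARD('n) * M * r ^ Suc p / fact (Suc p))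
      + real CARD('n) * M * r ^ p / fact p) * h ^ p"
    unfolding sum_distrib_right[symmetric] using h by (simp add: power_mult_distrib field_simps)
  finally show ?thesis by (simp add: y_def)
qed

lemma flux_differencing_volume_accuracy:
  fixes Dm :: "real^'n \<Rightarrow> real^'n \<Rightarrow> real^'n" and A :: "real^'n \<Rightarrow> real^'n^'n"
    and u :: "real \<Rightarrow> real^'n" and d x :: "nat \<Rightarrow> real"
  assumes "open U"
    and C5: "\<And>a. a \<in> U \<Longrightarrow> ((\<lambda>v. Dm a v) has_derivative (\<lambda>v. (1/2) *\<^sub>R (A a *v v))) (at a)"
    and "smooth_on (U \<times> U) (\<lambda>(a, b). Dm a b)" and "smooth_on UNIV u" "range u \<subseteq> U"
    and exact: "\<And>j. j \<le> p \<Longrightarrow> (\<Sum>m\<le>N. d m * x m ^ j) = real j * x i ^ (j - 1)" and "i \<le> N"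
  shows "(\<lambda>h. norm ((1 / h) *\<^sub>R (\<Sum>m\<le>N. (2 * d m) *\<^sub>R Dm (u (c + h * x i)) (u (c + h * x m)))
      - A (u (c + h * x i)) *v vector_derivative u (at (c + h * x i)))) \<in> O[at_right 0](\<lambda>h. h ^ p)"
proof -
  obtain L where L0: "\<And>s t. L 0 s t = Dm (u s) (u t)"
    and L: "\<And>j s t. (L j s has_vector_derivative L (Suc j) s t) (at t)"
    and L_cont: "\<And>j. continuous_on UNIV (\<lambda>z. L j (fst z) (snd z))"
    and L1: "\<And>s t D. ((\<lambda>b. Dm (u s) b) has_derivative D) (at (u t)) \<Longrightarrow> L 1 s t = D (vector_derivative u (at t))"
    using smooth_composition_partials[OF assms(1,3,4,5)] by blast
  have L1_diag: "A (u t) *v vector_derivative u (at t) = 2 *\<^sub>R L 1 t t" for t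
  proof -
    have "u t \<in> U" using \<open>range u \<subseteq> U\<close> by auto
    then show ?thesis using L1[OF C5] by simp
  qed
  define r where "r = (\<Sum>m\<le>N. \<bar>x m\<bar>)"
  have r: "\<bar>x m\<bar> \<le> r" if "m \<le> N" for m
    unfolding r_def using that by (intro member_le_sum) auto
  obtain M where M_pair: "\<And>z. z \<in> {c - r..c + r} \<times> {c - r..c + r} \<Longrightarrow> norm (L (Suc p) (fst z) (snd z)) \<le> M"
    using continuous_on_compact_bound[OF compact_Times[OF compact_Icc compact_Icc]
        continuous_on_subset[OF L_cont subset_UNIV]] by blast
  have M: "norm (L (Suc p) s t) \<le> M" if "s \<in> {c - r..c + r}" "t \<in> {c - r..c + r}" for s t
    using M_pair[of "(s, t)"] that by simp
  define K where "K = (\<Sum>m\<le>N. \<bar>d m\<bar>) * (real CARD('n) * M * r ^ Suc p / fact (Suc p))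
    + real CARD('n) * M * r ^ p / fact p"
  show ?thesis
  proof (rule bigoI[where c = "2 * K"], rule eventually_at_rightI[of 0 1])
    fix h :: real assume "h \<in> {0<..<1}"
    then have h: "0 < h" "h \<le> 1" by simp_all
    have "(1 / h) *\<^sub>R (\<Sum>m\<le>N. (2 * d m) *\<^sub>R Dm (u (c + h * x i)) (u (c + h * x m)))
        - A (u (c + h * x i)) *v vector_derivative u (at (c + h * x i))
      = 2 *\<^sub>R ((1 / h) *\<^sub>R (\<Sum>m\<le>N. d m *\<^sub>R L 0 (c + h * x i) (c + h * x m)) - L 1 (c + h * x i) (c + h * x i))"
      by (simp add: L0 L1_diag scaleR_sum_right algebra_simps)
    moreover have "norm ((1 / h) *\<^sub>R (\<Sum>m\<le>N. d m *\<^sub>R L 0 (c + h * x i) (c + h * x m)) - L 1 (c + h * x i) (c + h * x i))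
        \<le> K * h ^ p"
      unfolding K_def
      using stencil_taylor_estimate[where L = L and c = c and M = M, OF L exact \<open>i \<le> N\<close> r M h] by simp
    ultimately show "norm (norm ((1 / h) *\<^sub>R (\<Sum>m\<le>N. (2 * d m) *\<^sub>R Dm (u (c + h * x i)) (u (c + h * x m)))
        - A (u (c + h * x i)) *v vector_derivative u (at (c + h * x i)))) \<le> 2 * K * norm (h ^ p)"
      using h by simp
  qed simp
qed

theorem theorem1:
  fixes Uset :: "(real^'n::finite) set"
    and f :: "real^'n \<Rightarrow> real^'n"
    and fder :: "real^'n \<Rightarrow> ((real^'n) \<Rightarrow>\<^sub>L (real^'n))"
    and B :: "real^'n \<Rightarrow> real^'n^'n"
    and S :: "real^'n \<Rightarrow> real" and w :: "real^'n \<Rightarrow> real^'n" and q :: "real^'n \<Rightarrow> real"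
    and \<Phi> :: "real \<Rightarrow> real^'n \<Rightarrow> real^'n \<Rightarrow> real^'n"
    and Dm Dp :: "real^'n \<Rightarrow> real^'n \<Rightarrow> real^'n"
    and N p :: nat
  assumes Uopen: "open Uset"
    and f_C1: "\<forall>u\<in>Uset. (f has_derivative blinfun_apply (fder u)) (at u)"
    and fder_cont: "continuous_on Uset fder"
    and B_cont: "continuous_on Uset B"
    and S_convex: "strict_convex_on Uset S"
    and S_C2: "C2_with_gradient Uset S w"
    and q_flux: "\<forall>u\<in>Uset. (q has_derivative (\<lambda>v. w u \<bullet> (gen_jacobian fder B u *v v))) (at u)"
    and paths: "path_family Uset \<Phi>"
    and EC: "EC_fluctuations Uset (gen_jacobian fder B) \<Phi> w q Dm Dp"
    and Dm_smooth: "smooth_on (Uset \<times> Uset) (\<lambda>(a, b). Dm a b)"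
    and Dp_smooth: "smooth_on (Uset \<times> Uset) (\<lambda>(a, b). Dp a b)"
    and N_pos: "N \<ge> 1"
    and D_accurate: "\<forall>g i c. smooth_on UNIV g \<and> i \<le> N \<longrightarrow>
        (\<lambda>h. (1 / h) * (\<Sum>m\<le>N. lgl_D N i m * g (c + h * lgl_node N m))
              - deriv g (c + h * lgl_node N i)) \<in> O[at_right 0](\<lambda>h. h ^ p)"
  shows
    "(\<forall>(u :: real \<Rightarrow> real^'n) c i. smooth_on UNIV u \<and> range u \<subseteq> Uset \<and> i \<le> N \<longrightarrow>
        (\<lambda>h. norm ((1 / h) *\<^sub>R (\<Sum>m\<le>N. (2 * lgl_D N i m) *\<^sub>R
                   Dm (u (c + h * lgl_node N i)) (u (c + h * lgl_node N m)))
              - gen_jacobian fder B (u (c + h * lgl_node N i))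
                  *v vector_derivative u (at (c + h * lgl_node N i))))
          \<in> O[at_right 0](\<lambda>h. h ^ p))
   \<and>
    (\<forall>(dx :: int \<Rightarrow> real) (U :: int \<Rightarrow> nat \<Rightarrow> real \<Rightarrow> real^'n) (U' :: int \<Rightarrow> nat \<Rightarrow> real \<Rightarrow> real^'n).
       (\<forall>k. dx k > 0) \<and>
       (\<forall>k i t. i \<le> N \<longrightarrow> U k i t \<in> Uset \<and> (U k i has_vector_derivative U' k i t) (at t)) \<and>
       (\<forall>k i t. i \<le> N \<longrightarrow>
          (lgl_weight N i * (dx k / 2)) *\<^sub>R U' k i t
          + lgl_weight N i *\<^sub>R (\<Sum>m\<le>N. (2 * lgl_D N i m) *\<^sub>R Dm (U k i t) (U k m t))
          + (if i = 0 then Dp (U (k - 1) N t) (U k 0 t) else 0)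
          + (if i = N then Dm (U k N t) (U (k + 1) 0 t) else 0) = 0)
       \<longrightarrow>
       (\<forall>k t. ((\<lambda>t. \<Sum>i\<le>N. lgl_weight N i * (dx k / 2) * S (U k i t)) has_real_derivative
                 ((q (U (k - 1) N t) + w (U (k - 1) N t) \<bullet> Dm (U (k - 1) N t) (U k 0 t))
                - (q (U k N t) + w (U k N t) \<bullet> Dm (U k N t) (U (k + 1) 0 t)))) (at t)))"
proof -
  have C1: "\<And>a. a \<in> Uset \<Longrightarrow> Dm a a = 0"
    and C3: "\<And>a b. a \<in> Uset \<Longrightarrow> b \<in> Uset \<Longrightarrow> Dm a b + Dp b a = 0"
    and C4: "\<And>a b. a \<in> Uset \<Longrightarrow> b \<in> Uset \<Longrightarrow> w a \<bullet> Dm a b + w b \<bullet> Dp a b = q b - q a"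
    and C5: "\<And>a. a \<in> Uset \<Longrightarrow> ((\<lambda>v. Dm a v) has_derivative (\<lambda>v. (1/2) *\<^sub>R (gen_jacobian fder B a *v v))) (at a)"
    using EC unfolding EC_fluctuations_def by blast+
  have S_deriv: "\<And>a. a \<in> Uset \<Longrightarrow> (S has_derivative (\<lambda>v. w a \<bullet> v)) (at a)"
    using S_C2 unfolding C2_with_gradient_def by blast
  have exact: "(\<Sum>m\<le>N. lgl_D N i m * lgl_node N m ^ j) = real j * lgl_node N i ^ (j - 1)"
    if "i \<le> N" "j \<le> p" for i j
    using D_accurate that by (intro stencil_exact_on_monomials) auto
  have rows: "(\<Sum>m\<le>N. lgl_D N i m) = 0" if "i \<le> N" for i
    using exact[OF that, of 0] by simp
  show ?thesis
  proof (intro conjI allI impI, goal_cases)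
    case (1 u c i)
    then show ?case
      using flux_differencing_volume_accuracy[where d = "lgl_D N i" and x = "lgl_node N" and i = i and c = c,
          OF Uopen C5 Dm_smooth] exact by blast
  next
    case (2 dx U U' k t)
    then show ?case
      by (intro flux_differencing_entropy_rate[OF N_pos lgl_summation_by_parts[OF N_pos] rows C1 C3 C4
            S_deriv, where u = "U k" and u' = "U' k" and uL = "\<lambda>t. U (k - 1) N t"
            and uR = "\<lambda>t. U (k + 1) 0 t" and J = "dx k / 2"]) auto
  qed
qed

end
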